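(* Let $\gamma\in(0,1)$ and $\mu\in(0,\infty)\setminus\{1\}$, with $k=\lfloor1/\mu\rfloor$, $K=\lfloor 2/\mu\rfloor$ and $\gamma_c(\mu)=\frac{k}{k+1}\left(1-\frac{\mu}{2-k\mu}\right)$. Then there exists a concave traveling wave $g$ with compact nonempty support for the dynamics in the context. It is unique up to translation among such waves. Normalize it by translation so that $\sup\{x:g(x)>0\}=0$, and write its support as $[L,0]$ with $L<0$. Then: - $g$ is differentiable on $[L,0]$ except at finitely many points; - $g(x)=-\int_x^0 g'(y)\,dy$ for $x\in[L,0]$; - $g(x)=-\infty$ for $x\notin[L,0]$. Let $v$ be the speed of $g$, and let $s=\sup\{\xi\in\mathbb{R}:\sup_{x}\Phi_\xi[g](x)\ge\gamma\}$. (i) If $\gamma\le\gamma_c(\mu)$ (which forces $\mu<1$), then $v=\frac{2\gamma}{k(2-(k+1)\mu)}$ and $v\le s$. Moreover, for every integer $j\ge1$ and every $x\in[L,0]$ with $-jv<x<-(j-1)v$, one has $g'(x)=j\mu-1$. (ii) If $\gamma>\gamma_c(\mu)$, then $v=1-\gamma$ and $$v-s=1-(1-\gamma)\Big(k\big(1-\tfrac{k+1}{2}\mu\big)+1\Big)>0.$$ Moreover, for $x\in[L,0]$ (away from finitely many points): - $g'(x)=-1$ if $x>s-v$; - $g'(x)=j\mu-1$ if $s-(j+1)v<x<s-jv$ for some integer $1\le j\le K+1$; - $g'(x)=1+\mu$ if $x<s-(K+2)v$. In particular, $\gamma\mapsto v$ changes monotonicity at $\gamma_c(\mu)$ and is maximized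 there.
   Context: Let $\pi:\mathbb{R}\cup\{-\infty\}\to\mathbb{R}\cup\{-\infty\}$ be defined by $\pi(x)=x$ if $x\ge0$ and $\pi(x)=-\infty$ otherwise. Write $x_+=\max(x,0)$, and use the convention $\sup\emptyset=-\infty$. For $h:\mathbb{R}\to\mathbb{R}\cup\{-\infty\}$ and $\xi\in\mathbb{R}$, define $$\Phi_\xi[h](x)=1-\gamma-\mu(\xi-x)_++\sup_{y\in\mathbb{R}}\big(h(y)-|x-y|\big).$$ Given $g_0:\mathbb{R}\to\mathbb{R}\cup\{-\infty\}$, define recursively for $n\ge1$: - $p_n(x)=\pi\big[1-\gamma+\sup_{y}\big(g_{n-1}(y)-\min(1,\mu)(x-y)_+\big)\big]$; - $s_n=\sup\{x: p_n(x)\ge\gamma\}$; - $g_n=\pi\circ\Phi_{s_n}[g_{n-1}]$. A function $g$ is a traveling wave with speed $v$ if, when $g_0=g$, one has $g_n(x)=g(x-nv)$ for all $n\ge0$ and all $x$. The support of $g$ is $\{x:g(x)\ge0\}$. *)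

theory Defs
  imports "HOL-Analysis.Analysis" "HOL-Library.Extended_Real"
begin

definition piop :: "ereal \<Rightarrow> ereal" where
  "piop x = (if x \<ge> 0 then x else -\<infinity>)"

text \<open>\<Phi>_\<xi>[h](x) = 1 - \<gamma> - \<mu> (\<xi>-x)_+ + sup_y (h y - |x-y|); \<xi> may be \<plusminus>\<infinity>
  since s_n is a supremum with sup of the empty set = -\<infinity>.\<close>
definition Phi :: "real \<Rightarrow> real \<Rightarrow> ereal \<Rightarrow> (real \<Rightarrow> ereal) \<Rightarrow> real \<Rightarrow> ereal" where
  "Phi \<gamma> \<mu> \<xi> h x =
     ereal (1 - \<gamma>) - ereal \<mu> * max (\<xi> - ereal x) 0 + (SUP y. h y - ereal \<bar>x - y\<bar>)"

definition pfun :: "real \<Rightarrow> real \<Rightarrow> (real \<Rightarrow> ereal) \<Rightarrow> real \<Rightarrow> ereal" where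
  "pfun \<gamma> \<mu> h x =
     piop (ereal (1 - \<gamma>) + (SUP y. h y - ereal (min 1 \<mu> * max (x - y) 0)))"

definition sfun :: "real \<Rightarrow> real \<Rightarrow> (real \<Rightarrow> ereal) \<Rightarrow> ereal" where
  "sfun \<gamma> \<mu> h = Sup (ereal ` {x. pfun \<gamma> \<mu> h x \<ge> ereal \<gamma>})"

definition step :: "real \<Rightarrow> real \<Rightarrow> (real \<Rightarrow> ereal) \<Rightarrow> (real \<Rightarrow> ereal)" where
  "step \<gamma> \<mu> h = (\<lambda>x. piop (Phi \<gamma> \<mu> (sfun \<gamma> \<mu> h) h x))"

fun gseq :: "real \<Rightarrow> real \<Rightarrow> (real \<Rightarrow> ereal) \<Rightarrow> nat \<Rightarrow> (real \<Rightarrow> ereal)" where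
  "gseq \<gamma> \<mu> g0 0 = g0"
| "gseq \<gamma> \<mu> g0 (Suc n) = step \<gamma> \<mu> (gseq \<gamma> \<mu> g0 n)"

definition traveling_wave :: "real \<Rightarrow> real \<Rightarrow> (real \<Rightarrow> ereal) \<Rightarrow> real \<Rightarrow> bool" where
  "traveling_wave \<gamma> \<mu> g v \<longleftrightarrow> (\<forall>n x. gseq \<gamma> \<mu> g n x = g (x - real n * v))"

definition support :: "(real \<Rightarrow> ereal) \<Rightarrow> real set" where
  "support g = {x. g x \<ge> 0}"

definition concave_ext :: "(real \<Rightarrow> ereal) \<Rightarrow> bool" where
  "concave_ext g \<longleftrightarrow>
     (\<forall>x y t. 0 < t \<and> t < 1 \<longrightarrow> ereal t * g x + ereal (1 - t) * g y \<le> g (t * x + (1 - t) * y))"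

definition admissible_wave :: "(real \<Rightarrow> ereal) \<Rightarrow> bool" where
  "admissible_wave g \<longleftrightarrow> (\<forall>x. g x \<noteq> \<infinity>) \<and> concave_ext g \<and>
     compact (support g) \<and> support g \<noteq> {}"

definition kk :: "real \<Rightarrow> real" where "kk \<mu> = real_of_int \<lfloor>1 / \<mu>\<rfloor>"
definition KK :: "real \<Rightarrow> real" where "KK \<mu> = real_of_int \<lfloor>2 / \<mu>\<rfloor>"
definition gamma_c :: "real \<Rightarrow> real" where
  "gamma_c \<mu> = kk \<mu> / (kk \<mu> + 1) * (1 - \<mu> / (2 - kk \<mu> * \<mu>))"

definition speed_formula :: "real \<Rightarrow> real \<Rightarrow> real" where
  "speed_formula \<mu> \<gamma> = (if \<gamma> \<le> gamma_c \<mu> then 2 * \<gamma> / (kk \<mu> * (2 - (kk \<mu> + 1) * \<mu>)) else 1 - \<gamma>)"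

end

theory Submission
  imports Defs
begin

text \<open>
  Translate a wave so that it equals \<open>-\<infinity>\<close> on \<open>(0, \<infinity>)\<close> and \<open>0\<close> at \<open>0\<close>. One step of the dynamics
  then reads \<open>g (x - v) = \<pi> (a x + D g x)\<close>, where \<open>a x = 1 - \<gamma> - \<mu> (S - x)\<^sub>+\<close>, \<open>S\<close> is the
  threshold \<open>s\<^sub>n\<close> and \<open>D g\<close> is the 1-Lipschitz envelope \<open>sup\<^sub>y (g y - |x - y|)\<close>. Since \<open>a\<close>
  is nondecreasing and \<open>D g\<close> is 1-Lipschitz, the recursion makes \<open>g + id\<close> nondecreasing on the
  support (an interval, by concavity), so \<open>D g x\<close> only sees \<open>g\<close> on \<open>[x, 0]\<close>, and the
  recursion determines \<open>g\<close> on \<open>[-(n+1) v, 0]\<close> from \<open>g\<close> on \<open>[-n v, 0]\<close>: for given \<open>(v, S)\<close> the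
  wave is unique. It is the nonnegative part of the concave piecewise linear function with slopes
  \<open>-1, \<mu> - 1, 2\<mu> - 1, \<dots>, (K+1)\<mu> - 1, 1 + \<mu>\<close> and kinks at \<open>min S v - j v\<close>, which indeed solves
  the recursion. Finally \<open>g 0 = 0\<close> forces \<open>1 - \<gamma> - \<mu> (S - v)\<^sub>+ = v\<close>, and \<open>S\<close> is where the
  one-sided envelope \<open>sup\<^sub>y (g y - min 1 \<mu> (x - y)\<^sub>+)\<close> drops to \<open>2\<gamma> - 1\<close>; evaluating it at the
  kink \<open>min S v - k v\<close> gives a second equation. Together they determine \<open>(v, S)\<close>, with
  \<open>S \<ge> v\<close> exactly when \<open>\<gamma> \<le> \<gamma>\<^sub>c(\<mu>)\<close>.
\<close>

section \<open>Envelopes\<close>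

definition lip_env :: "(real \<Rightarrow> ereal) \<Rightarrow> real \<Rightarrow> ereal" where
  "lip_env g z = (SUP y. g y - ereal \<bar>z - y\<bar>)"

definition decay_env :: "real \<Rightarrow> (real \<Rightarrow> ereal) \<Rightarrow> real \<Rightarrow> ereal" where
  "decay_env c g x = (SUP y. g y - ereal (c * max (x - y) 0))"

lemma Phi_lip_env: "Phi \<gamma> \<mu> \<xi> h x = ereal (1-\<gamma>) - ereal \<mu> * max (\<xi> - ereal x) 0 + lip_env h x"
  by (simp add: Phi_def lip_env_def)

lemma pfun_decay_env: "pfun \<gamma> \<mu> h x = piop (ereal (1-\<gamma>) + decay_env (min 1 \<mu>) h x)"
  by (simp add: pfun_def decay_env_def)

lemma piop_ereal: "piop (ereal r) = (if 0 \<le> r then ereal r else -\<infinity>)"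
  by (simp add: piop_def)

lemma piop_neg: "x < 0 \<Longrightarrow> piop x = -\<infinity>"
  by (simp add: piop_def)

lemma piop_not_minf: "piop x \<noteq> -\<infinity> \<Longrightarrow> piop x = x \<and> 0 \<le> x"
  by (simp add: piop_def split: if_splits)

lemma ereal_le_piop_iff: "0 < g \<Longrightarrow> (ereal g \<le> piop (ereal r)) = (g \<le> r)"
  by (auto simp: piop_ereal)

lemma piop_zero: "piop (ereal r) = 0 \<Longrightarrow> r = 0"
  by (auto simp: piop_ereal zero_ereal_def split: if_splits)

lemma Phi_real: "Phi \<gamma> \<mu> (ereal \<xi>) g x = ereal (1 - \<gamma> - \<mu> * max (\<xi> - x) 0) + lip_env g x"
proof -
  have "ereal \<mu> * max (ereal \<xi> - ereal x) 0 = ereal (\<mu> * max (\<xi> - x) 0)"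
    by (simp del: ereal_max add: max_def)
  then show ?thesis unfolding Phi_lip_env by simp
qed

lemma ereal_real_cases: "(x::ereal) \<noteq> \<infinity> \<Longrightarrow> x \<noteq> -\<infinity> \<Longrightarrow> x = ereal (real_of_ereal x)"
  by (cases x) auto

lemma min_one_penalty_le:
  fixes \<mu> \<xi> x y :: real
  assumes "0 \<le> \<mu>"
  shows "min 1 \<mu> * max (\<xi> - y) 0 \<le> \<mu> * max (\<xi> - x) 0 + \<bar>x - y\<bar>"
proof -
  define c where "c = min 1 \<mu>"
  have c: "0 \<le> c" "c \<le> 1" "c \<le> \<mu>" using assms by (auto simp: c_def)
  have "c * (\<xi> - y) \<le> \<mu> * max (\<xi> - x) 0 + \<bar>x - y\<bar>" if "y < \<xi>"
  proof (cases "x \<le> \<xi>")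
    case True
    have "c * (\<xi> - y) = c * (\<xi> - x) + c * (x - y)" by (simp add: algebra_simps)
    also have "\<dots> \<le> \<mu> * (\<xi> - x) + \<bar>x - y\<bar>"
      using c True mult_right_mono[of c \<mu> "\<xi> - x"] mult_left_le_one_le[of "\<bar>x - y\<bar>" c]
        mult_left_mono[of "x - y" "\<bar>x - y\<bar>" c] by linarith
    finally show ?thesis using True by simp
  next
    case False
    have "c * (\<xi> - y) \<le> \<xi> - y" using c that by (intro mult_left_le_one_le) auto
    then show ?thesis using False assms by simp
  qed
  then show ?thesis using assms unfolding c_def[symmetric] by (cases "y < \<xi>") auto
qed

lemma min_one_penalty_attained:
  fixes \<mu> \<xi> y :: real
  obtains x where "\<mu> * max (\<xi> - x) 0 + \<bar>x - y\<bar> \<le> min 1 \<mu> * max (\<xi> - y) 0"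
proof (cases "\<xi> \<le> y \<or> \<mu> \<le> 1")
  case True
  then show ?thesis by (intro that[of y]) (auto simp: min_def)
next
  case False
  then show ?thesis by (intro that[of \<xi>]) simp
qed

text \<open>Optimising first over the location \<open>x\<close> turns the two-sided envelope in \<open>\<Phi>\<close> into the
  one-sided one of \<open>p\<^sub>n\<close>.\<close>

lemma SUP_Phi_eq_decay_env:
  assumes fin: "\<And>y. g y \<noteq> \<infinity>" and mu: "0 \<le> \<mu>"
  shows "(SUP x. Phi \<gamma> \<mu> (ereal \<xi>) g x) = ereal (1-\<gamma>) + decay_env (min 1 \<mu>) g \<xi>"
proof -
  define a where "a x = 1 - \<gamma> - \<mu> * max (\<xi> - x) 0" for x
  have Phi_SUP: "Phi \<gamma> \<mu> (ereal \<xi>) g x = (SUP y. ereal (a x) + (g y - ereal \<bar>x - y\<bar>))" for x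
    unfolding Phi_real lip_env_def a_def by (subst SUP_ereal_add_right) auto
  have rhs_SUP: "ereal (1-\<gamma>) + decay_env (min 1 \<mu>) g \<xi>
      = (SUP y. ereal (1-\<gamma>) + (g y - ereal (min 1 \<mu> * max (\<xi> - y) 0)))"
    unfolding decay_env_def by (subst SUP_ereal_add_right) auto
  have term_le: "ereal (a x) + (g y - ereal \<bar>x - y\<bar>)
      \<le> ereal (1-\<gamma>) + (g y - ereal (min 1 \<mu> * max (\<xi> - y) 0))"
    if "\<mu> * max (\<xi> - x) 0 + \<bar>x - y\<bar> \<ge> min 1 \<mu> * max (\<xi> - y) 0" for x y
    using that fin[of y] by (cases "g y") (auto simp: a_def)
  have term_ge: "ereal (1-\<gamma>) + (g y - ereal (min 1 \<mu> * max (\<xi> - y) 0))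
      \<le> ereal (a x) + (g y - ereal \<bar>x - y\<bar>)"
    if "\<mu> * max (\<xi> - x) 0 + \<bar>x - y\<bar> \<le> min 1 \<mu> * max (\<xi> - y) 0" for x y
    using that fin[of y] by (cases "g y") (auto simp: a_def)
  show ?thesis
  proof (rule antisym)
    show "(SUP x. Phi \<gamma> \<mu> (ereal \<xi>) g x) \<le> ereal (1-\<gamma>) + decay_env (min 1 \<mu>) g \<xi>"
      unfolding Phi_SUP rhs_SUP
    proof (intro SUP_least)
      fix x y
      show "ereal (a x) + (g y - ereal \<bar>x - y\<bar>)
          \<le> (SUP y. ereal (1-\<gamma>) + (g y - ereal (min 1 \<mu> * max (\<xi> - y) 0)))"
        using term_le[OF min_one_penalty_le[OF mu]] by (rule SUP_upper2[OF UNIV_I])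
    qed
    show "ereal (1-\<gamma>) + decay_env (min 1 \<mu>) g \<xi> \<le> (SUP x. Phi \<gamma> \<mu> (ereal \<xi>) g x)"
      unfolding rhs_SUP
    proof (rule SUP_least)
      fix y
      obtain x where x: "\<mu> * max (\<xi> - x) 0 + \<bar>x - y\<bar> \<le> min 1 \<mu> * max (\<xi> - y) 0"
        by (rule min_one_penalty_attained)
      have "ereal (1-\<gamma>) + (g y - ereal (min 1 \<mu> * max (\<xi> - y) 0)) \<le> Phi \<gamma> \<mu> (ereal \<xi>) g x"
        unfolding Phi_SUP using term_ge[OF x] by (intro SUP_upper2[where i = y]) auto
      also have "\<dots> \<le> (SUP x. Phi \<gamma> \<mu> (ereal \<xi>) g x)" by (rule SUP_upper) simp
      finally show "ereal (1-\<gamma>) + (g y - ereal (min 1 \<mu> * max (\<xi> - y) 0))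
          \<le> (SUP x. Phi \<gamma> \<mu> (ereal \<xi>) g x)" .
    qed
  qed
qed

lemma decay_env_le_shift:
  assumes "x \<le> x'" and "0 \<le> c"
  shows "decay_env c g x \<le> decay_env c g x' + ereal (c * (x' - x))"
  unfolding decay_env_def[of c g x]
proof (rule SUP_least)
  fix y
  have "max (x' - y) 0 \<le> max (x - y) 0 + (x' - x)" using assms(1) by (simp add: max_def)
  from mult_left_mono[OF this assms(2)]
  have "c * max (x' - y) 0 \<le> c * max (x - y) 0 + c * (x' - x)" by (simp add: distrib_left)
  then have "g y - ereal (c * max (x - y) 0) \<le> g y - ereal (c * max (x' - y) 0) + ereal (c * (x' - x))"
    by (cases "g y") auto
  also have "\<dots> \<le> decay_env c g x' + ereal (c * (x' - x))"
    unfolding decay_env_def by (intro add_right_mono SUP_upper) simp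
  finally show "g y - ereal (c * max (x - y) 0) \<le> decay_env c g x' + ereal (c * (x' - x))" .
qed

lemma lip_env_lipschitz:
  assumes fin: "\<And>y. g y \<noteq> \<infinity>"
  shows "lip_env g z \<le> lip_env g z' + ereal \<bar>z - z'\<bar>"
proof -
  have "lip_env g z \<le> (SUP y. g y - ereal \<bar>z' - y\<bar> + ereal \<bar>z - z'\<bar>)"
    unfolding lip_env_def
  proof (rule SUP_mono)
    fix y
    have "g y - ereal \<bar>z - y\<bar> \<le> g y - ereal \<bar>z' - y\<bar> + ereal \<bar>z - z'\<bar>"
    proof (cases "g y")
      case (real r) then show ?thesis by simp
    qed (use fin in auto)
    then show "\<exists>m\<in>UNIV. g y - ereal \<bar>z - y\<bar> \<le> g m - ereal \<bar>z' - m\<bar> + ereal \<bar>z - z'\<bar>" by blast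
  qed
  also have "\<dots> = lip_env g z' + ereal \<bar>z - z'\<bar>"
    unfolding lip_env_def by (subst SUP_ereal_add_left) auto
  finally show ?thesis .
qed

lemma lip_env_ge: "g y - ereal \<bar>z - y\<bar> \<le> lip_env g z"
  unfolding lip_env_def by (rule SUP_upper) auto

locale anchored =
  fixes g :: "real \<Rightarrow> ereal"
  assumes fin: "\<And>y. g y \<noteq> \<infinity>"
    and neg: "\<And>y. y > 0 \<Longrightarrow> g y = -\<infinity>"
    and g0: "g 0 = 0"
    and mono: "\<And>y1 y2. y1 \<le> y2 \<Longrightarrow> y2 \<le> 0 \<Longrightarrow> g y1 \<noteq> -\<infinity> \<Longrightarrow> g y1 + ereal y1 \<le> g y2 + ereal y2"
begin

lemma lip_env_pos: assumes "z \<ge> 0" shows "lip_env g z = ereal (-z)"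
proof (rule antisym)
  show "lip_env g z \<le> ereal (-z)" unfolding lip_env_def
  proof (rule SUP_least)
    fix y
    show "g y - ereal \<bar>z - y\<bar> \<le> ereal (- z)"
    proof (cases "y > 0")
      case True then show ?thesis using neg by simp
    next
      case False
      show ?thesis
      proof (cases "g y = -\<infinity>")
        case True then show ?thesis by simp
      next
        case F2: False
        have "g y + ereal y \<le> g 0 + ereal 0" using mono[of y 0] False F2 by simp
        then have "g y + ereal y \<le> 0" using g0 by simp
        moreover obtain r where "g y = ereal r" using F2 fin by (cases "g y") auto
        ultimately show ?thesis using False assms by simp
      qed
    qed
  qed
  show "ereal (-z) \<le> lip_env g z" using lip_env_ge[of g 0 z] g0 assms by simp
qed

lemma lip_env_nonpos: assumes "z \<le> 0" shows "lip_env g z = (SUP y\<in>{z..0}. g y - ereal y) + ereal z"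
proof -
  have R: "(SUP y\<in>{z..0}. g y - ereal y) + ereal z = (SUP y\<in>{z..0}. g y - ereal y + ereal z)"
    using assms by (subst SUP_ereal_add_left) auto
  have eq: "g y - ereal y + ereal z = g y - ereal \<bar>z - y\<bar>" if "z \<le> y" for y
  proof (cases "g y")
    case (real r) then show ?thesis using that by simp
  qed (use fin in auto)
  show ?thesis unfolding R
  proof (rule antisym)
    show "lip_env g z \<le> (SUP y\<in>{z..0}. g y - ereal y + ereal z)" unfolding lip_env_def
    proof (rule SUP_least)
      fix y
      show "g y - ereal \<bar>z - y\<bar> \<le> (SUP y\<in>{z..0}. g y - ereal y + ereal z)"
      proof (cases "y > 0")
        case True then show ?thesis using neg by simp
      next
        case False
        show ?thesis
        proof (cases "y \<ge> z")
          case True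
          then show ?thesis using False eq[of y] by (intro SUP_upper2[of y]) auto
        next
          case F2: False
          show ?thesis
          proof (cases "g y = -\<infinity>")
            case True then show ?thesis by simp
          next
            case F3: False
            have m: "g y + ereal y \<le> g z + ereal z" using mono[of y z] F2 F3 assms by simp
            obtain r where r: "g y = ereal r" using F3 fin by (cases "g y") auto
            have gz: "g z \<noteq> -\<infinity>" using m r by auto
            obtain q where q: "g z = ereal q" using gz fin by (cases "g z") auto
            have "g y - ereal \<bar>z - y\<bar> \<le> g z - ereal z + ereal z"
              using m r q F2 by simp
            then show ?thesis using assms by (intro SUP_upper2[of z]) auto
          qed
        qed
      qed
    qed
    show "(SUP y\<in>{z..0}. g y - ereal y + ereal z) \<le> lip_env g z"
    proof (rule SUP_least)
      fix y assume "y \<in> {z..0}"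
      then show "g y - ereal y + ereal z \<le> lip_env g z" using eq[of y] lip_env_ge[of g y z] by simp
    qed
  qed
qed

lemma lip_env_local:
  assumes "anchored g2" and agree: "\<And>y. y \<ge> z \<Longrightarrow> g2 y = g y"
  shows "lip_env g2 z = lip_env g z"
proof (cases "z \<ge> 0")
  case True
  then show ?thesis using anchored.lip_env_pos[OF assms(1)] lip_env_pos by simp
next
  case False
  have "(SUP y\<in>{z..0}. g2 y - ereal y) = (SUP y\<in>{z..0}. g y - ereal y)"
    by (rule SUP_cong) (auto simp: agree)
  then show ?thesis using anchored.lip_env_nonpos[OF assms(1)] lip_env_nonpos False by simp
qed

end

lemma recursion_unique:
  assumes m1: "anchored g1" and m2: "anchored g2" and v: "v > 0"
    and e1: "\<And>x. g1 (x - v) = piop (ereal (A x) + lip_env g1 x)"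
    and e2: "\<And>x. g2 (x - v) = piop (ereal (A x) + lip_env g2 x)"
  shows "g1 = g2"
proof -
  have P: "\<forall>y. y \<ge> - (real n * v) \<longrightarrow> g1 y = g2 y" for n
  proof (induction n)
    case 0
    show ?case
    proof (intro allI impI)
      fix y :: real assume "y \<ge> - (real 0 * v)"
      then have "y \<ge> 0" by simp
      then show "g1 y = g2 y"
        using anchored.neg[OF m1, of y] anchored.neg[OF m2, of y] anchored.g0[OF m1] anchored.g0[OF m2]
        by (cases "y = 0") auto
    qed
  next
    case (Suc n)
    show ?case
    proof (intro allI impI)
      fix y :: real assume y: "y \<ge> - (real (Suc n) * v)"
      show "g1 y = g2 y"
      proof (cases "y \<ge> - (real n * v)")
        case True then show ?thesis using Suc.IH by blast
      next
        case False
        have agree: "\<And>y'. y' \<ge> y + v \<Longrightarrow> g2 y' = g1 y'"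
          using Suc.IH y by (auto simp: algebra_simps)
        have D: "lip_env g2 (y + v) = lip_env g1 (y + v)"
          by (rule anchored.lip_env_local[OF m1 m2 agree]) simp
        have "g1 y = piop (ereal (A (y + v)) + lip_env g1 (y + v))" using e1[of "y + v"] by simp
        moreover have "g2 y = piop (ereal (A (y + v)) + lip_env g2 (y + v))" using e2[of "y + v"] by simp
        ultimately show ?thesis using D by simp
      qed
    qed
  qed
  show ?thesis
  proof (rule ext)
    fix y :: real
    obtain n :: nat where n: "real n \<ge> - y / v" using real_arch_simple by blast
    then have "real n * v \<ge> - y" using v by (simp add: field_simps)
    then show "g1 y = g2 y" using P[of n] by auto
  qed
qed

section \<open>Translations\<close>

definition shift :: "real \<Rightarrow> (real \<Rightarrow> ereal) \<Rightarrow> real \<Rightarrow> ereal" where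
  "shift c g = (\<lambda>x. g (x - c))"

lemma SUP_shift_real: "(SUP y::real. f (y - c)) = (SUP y. f y :: 'a::complete_lattice)"
proof -
  have "range (\<lambda>y. f (y - c)) = range f"
  proof (intro set_eqI iffI)
    fix z assume "z \<in> range f"
    then obtain y where "z = f ((y + c) - c)" by auto
    then show "z \<in> range (\<lambda>y. f (y - c))" by blast
  qed auto
  then show ?thesis by simp
qed

lemma lip_env_shift: "lip_env (shift c g) z = lip_env g (z - c)"
proof -
  have "lip_env (shift c g) z = (SUP y. (\<lambda>w. g w - ereal \<bar>z - c - w\<bar>) (y - c))"
    unfolding lip_env_def shift_def by (simp add: algebra_simps)
  also have "\<dots> = lip_env g (z - c)" unfolding lip_env_def by (rule SUP_shift_real)
  finally show ?thesis .
qed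

lemma decay_env_shift: "decay_env a (shift c g) x = decay_env a g (x - c)"
proof -
  have "decay_env a (shift c g) x = (SUP y. (\<lambda>w. g w - ereal (a * max (x - c - w) 0)) (y - c))"
    unfolding decay_env_def shift_def by (simp add: algebra_simps)
  also have "\<dots> = decay_env a g (x - c)" unfolding decay_env_def by (rule SUP_shift_real)
  finally show ?thesis .
qed

lemma pfun_shift: "pfun \<gamma> \<mu> (shift c g) x = pfun \<gamma> \<mu> g (x - c)"
  by (simp add: pfun_decay_env decay_env_shift)

lemma sfun_shift: "sfun \<gamma> \<mu> (shift c g) = sfun \<gamma> \<mu> g + ereal c"
proof -
  define A where "A = {x. pfun \<gamma> \<mu> g x \<ge> ereal \<gamma>}"
  have "{x. pfun \<gamma> \<mu> (shift c g) x \<ge> ereal \<gamma>} = (\<lambda>x. x + c) ` A"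
    unfolding A_def pfun_shift by (force intro: image_eqI[where x = "_ - c"])
  then have "sfun \<gamma> \<mu> (shift c g) = (SUP e\<in>ereal ` A. e + ereal c)"
    unfolding sfun_def by (simp add: image_image)
  also have "\<dots> = Sup (ereal ` A) + ereal c"
    by (cases "A = {}") (simp_all add: bot_ereal_def SUP_ereal_add_left)
  finally show ?thesis unfolding sfun_def A_def .
qed

lemma Phi_shift: "Phi \<gamma> \<mu> (\<xi> + ereal c) (shift c g) x = Phi \<gamma> \<mu> \<xi> g (x - c)"
proof -
  have "\<xi> + ereal c - ereal x = \<xi> - ereal (x - c)"
    by (cases \<xi>) auto
  then show ?thesis by (simp add: Phi_lip_env lip_env_shift)
qed

lemma step_shift: "step \<gamma> \<mu> (shift c g) = shift c (step \<gamma> \<mu> g)"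
  unfolding step_def sfun_shift Phi_shift by (simp add: shift_def)

lemma shift_shift: "shift a (shift b g) = shift (a + b) g"
  by (simp add: shift_def algebra_simps)

lemma traveling_waveI:
  assumes "step \<gamma> \<mu> g = shift v g"
  shows "traveling_wave \<gamma> \<mu> g v"
proof -
  have "gseq \<gamma> \<mu> g n = shift (real n * v) g" for n
  proof (induction n)
    case 0 then show ?case by (simp add: shift_def)
  next
    case (Suc n)
    have "gseq \<gamma> \<mu> g (Suc n) = step \<gamma> \<mu> (shift (real n * v) g)" using Suc by simp
    also have "\<dots> = shift (real n * v) (shift v g)" by (simp add: step_shift assms)
    also have "\<dots> = shift (real (Suc n) * v) g" by (simp add: shift_shift algebra_simps)
    finally show ?case .
  qed
  then show ?thesis unfolding traveling_wave_def shift_def by simp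
qed

lemma traveling_wave_step:
  assumes "traveling_wave \<gamma> \<mu> g v"
  shows "step \<gamma> \<mu> g = shift v g"
  using assms[unfolded traveling_wave_def, rule_format, of 1] by (auto simp: shift_def)

lemma traveling_wave_shift:
  assumes "traveling_wave \<gamma> \<mu> g v"
  shows "traveling_wave \<gamma> \<mu> (shift c g) v"
proof (rule traveling_waveI)
  have "step \<gamma> \<mu> (shift c g) = shift c (shift v g)"
    by (simp add: step_shift traveling_wave_step[OF assms])
  then show "step \<gamma> \<mu> (shift c g) = shift v (shift c g)"
    by (simp add: shift_shift add.commute)
qed

lemma support_shift: "support (shift c g) = (\<lambda>x. x + c) ` support g"
  by (force simp: support_def shift_def intro: image_eqI[where x = "_ - c"])

lemma concave_shift:
  assumes "concave_ext g" shows "concave_ext (shift c g)"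
  unfolding concave_ext_def shift_def
proof (intro allI impI)
  fix x y t :: real assume t: "0 < t \<and> t < 1"
  have "ereal t * g (x - c) + ereal (1 - t) * g (y - c) \<le> g (t * (x - c) + (1 - t) * (y - c))"
    using assms t unfolding concave_ext_def by blast
  also have "t * (x - c) + (1 - t) * (y - c) = t * x + (1 - t) * y - c" by algebra
  finally show "ereal t * g (x - c) + ereal (1 - t) * g (y - c) \<le> g (t * x + (1 - t) * y - c)" .
qed

lemma admissible_shift:
  assumes "admissible_wave g" shows "admissible_wave (shift c g)"
proof -
  have "compact ((\<lambda>x. x + c) ` support g)"
    using assms unfolding admissible_wave_def
    by (intro compact_continuous_image continuous_intros) auto
  then show ?thesis using assms concave_shift
    unfolding admissible_wave_def support_shift by (auto simp: shift_def)
qed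

section \<open>The piecewise linear profile\<close>

text \<open>Piece \<open>j\<close> is affine with slope \<open>slope \<mu> K j\<close> and continues piece \<open>j - 1\<close> at the breakpoint
  \<open>m - j v\<close>; as the slopes increase, the profile (the minimum of the pieces) is the concave function
  that follows piece \<open>j\<close> between breakpoints \<open>j + 1\<close> and \<open>j\<close>. \<open>cutoff\<close> applies \<open>\<pi>\<close> to it.\<close>

definition slope :: "real \<Rightarrow> nat \<Rightarrow> nat \<Rightarrow> real" where
  "slope \<mu> K j = (if j = 0 then -1 else if j \<le> K + 1 then real j * \<mu> - 1 else 1 + \<mu>)"
definition breakpoint :: "real \<Rightarrow> real \<Rightarrow> nat \<Rightarrow> real" where
  "breakpoint m v j = m - real j * v"
fun piece :: "real \<Rightarrow> nat \<Rightarrow> real \<Rightarrow> real \<Rightarrow> nat \<Rightarrow> real \<Rightarrow> real" where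
  "piece \<mu> K m v 0 y = - y"
| "piece \<mu> K m v (Suc j) y = piece \<mu> K m v j (breakpoint m v (Suc j)) + slope \<mu> K (Suc j) * (y - breakpoint m v (Suc j))"
definition profile :: "real \<Rightarrow> nat \<Rightarrow> real \<Rightarrow> real \<Rightarrow> real \<Rightarrow> real" where
  "profile \<mu> K m v y = Min ((\<lambda>j. piece \<mu> K m v j y) ` {..K+2})"
definition cutoff :: "(real \<Rightarrow> real) \<Rightarrow> real \<Rightarrow> ereal" where
  "cutoff W y = piop (ereal (W y))"

locale piecewise_profile =
  fixes \<mu> :: real and K :: nat and m v :: real
  assumes mu: "0 < \<mu>" and vpos: "0 < v" and Kmu1: "real K * \<mu> \<le> 2"
    and Kmu2: "2 < (real K + 1) * \<mu>" and mv: "m \<le> v"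
begin

abbreviation "s \<equiv> slope \<mu> K"
abbreviation "b \<equiv> breakpoint m v"
abbreviation "l \<equiv> piece \<mu> K m v"
abbreviation "W \<equiv> profile \<mu> K m v"

lemma s_lin: "j \<le> K + 1 \<Longrightarrow> s j = real j * \<mu> - 1"
  by (simp add: slope_def)

lemma s_ge: "s j \<ge> -1"
  using mu by (simp add: slope_def)

lemma s_le: "j \<le> K \<Longrightarrow> s j \<le> 1"
proof -
  assume j: "j \<le> K"
  have "real j * \<mu> \<le> real K * \<mu>" using j mu by (intro mult_right_mono) auto
  then show ?thesis using Kmu1 j by (simp add: slope_def)
qed

lemma s_K1: "s (Suc K) > 1"
  using Kmu2 by (simp add: slope_def algebra_simps)

lemma s_N: "s (K + 2) = 1 + \<mu>"
  by (simp add: slope_def)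

lemma s_upper: "s j \<le> 1 + \<mu>"
proof (cases "j = 0 \<or> j > K + 1")
  case True then show ?thesis using mu by (auto simp: slope_def)
next
  case False
  then have j: "j \<le> K + 1" by auto
  have "real j * \<mu> \<le> (real K + 1) * \<mu>" using j mu by (intro mult_right_mono) auto
  then show ?thesis using Kmu1 j mu by (simp add: slope_def algebra_simps)
qed

lemma s_mono: "i \<le> j \<Longrightarrow> s i \<le> s j"
proof -
  assume ij: "i \<le> j"
  show ?thesis
  proof (cases "j > K + 1")
    case True then show ?thesis using s_upper[of i] by (simp add: slope_def)
  next
    case False
    then have "j \<le> K + 1" "i \<le> K + 1" using ij by auto
    moreover have "real i * \<mu> \<le> real j * \<mu>" using ij mu by (intro mult_right_mono) auto
    ultimately show ?thesis by (simp add: s_lin)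
  qed
qed

lemma b_mono: "i \<le> j \<Longrightarrow> b j \<le> b i"
  using vpos by (simp add: breakpoint_def mult_right_mono)

lemma b_Suc: "b (Suc j) = b j - v"
  by (simp add: breakpoint_def algebra_simps)

lemma piece_affine: "l j y = l j z + s j * (y - z)"
  by (induction j) (simp_all add: slope_def algebra_simps)

lemma piece_Suc_diff: "l (Suc j) y - l j y = (s (Suc j) - s j) * (y - b (Suc j))"
  using piece_affine[of j "b (Suc j)" y] by (simp add: algebra_simps)

lemma piece_le_later: "j \<le> i \<Longrightarrow> i \<le> K + 2 \<Longrightarrow> (j < K + 2 \<Longrightarrow> b (Suc j) \<le> y) \<Longrightarrow> l j y \<le> l i y"
proof (induction i)
  case 0 then show ?case by simp
next
  case (Suc i)
  show ?case
  proof (cases "j = Suc i")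
    case True then show ?thesis by simp
  next
    case False
    then have ji: "j \<le> i" using Suc.prems by simp
    have IH: "l j y \<le> l i y" using Suc.IH[OF ji] Suc.prems by simp
    have "b (Suc i) \<le> b (Suc j)" using ji by (intro b_mono) simp
    then have "0 \<le> y - b (Suc i)" using Suc.prems ji by simp
    moreover have "0 \<le> s (Suc i) - s i" using s_mono[of i "Suc i"] by simp
    ultimately have "0 \<le> l (Suc i) y - l i y" unfolding piece_Suc_diff by simp
    then show ?thesis using IH by simp
  qed
qed

lemma piece_le_earlier: "k \<le> j \<Longrightarrow> (0 < j \<Longrightarrow> y \<le> b j) \<Longrightarrow> l j y \<le> l (j - k) y"
proof (induction k)
  case 0 then show ?case by simp
next
  case (Suc k)
  have IH: "l j y \<le> l (j - k) y" using Suc by simp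
  obtain i where i: "j - k = Suc i" "j - Suc k = i" using Suc.prems by (metis Suc_diff_Suc Suc_le_lessD)
  have "b (j - k) \<ge> b j" by (intro b_mono) simp
  then have "y - b (Suc i) \<le> 0" using Suc.prems i by simp
  moreover have "0 \<le> s (Suc i) - s i" using s_mono[of i "Suc i"] by simp
  ultimately have "l (Suc i) y - l i y \<le> 0" unfolding piece_Suc_diff by (simp add: mult_nonneg_nonpos)
  then show ?case using IH i by simp
qed

lemma W_eq_piece:
  assumes "j \<le> K + 2" "0 < j \<Longrightarrow> y \<le> b j" "j < K + 2 \<Longrightarrow> b (Suc j) \<le> y"
  shows "W y = l j y"
  unfolding profile_def
proof (rule Min_eqI)
  show "finite ((\<lambda>j. l j y) ` {..K + 2})" by simp
  show "l j y \<in> (\<lambda>j. l j y) ` {..K + 2}" using assms by auto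
  fix z assume "z \<in> (\<lambda>j. l j y) ` {..K + 2}"
  then obtain i where i: "i \<le> K + 2" "z = l i y" by auto
  show "l j y \<le> z"
  proof (cases "j \<le> i")
    case True then show ?thesis using piece_le_later[of j i y] assms i by simp
  next
    case False
    then show ?thesis using piece_le_earlier[of "j - i" j y] assms i by simp
  qed
qed

lemma W_le_piece: "j \<le> K + 2 \<Longrightarrow> W y \<le> l j y"
  unfolding profile_def by (rule Min_le) auto

lemma W_attained: "\<exists>j \<le> K + 2. W y = l j y"
proof -
  have "W y \<in> (\<lambda>j. l j y) ` {..K + 2}" unfolding profile_def by (rule Min_in) auto
  then show ?thesis by auto
qed

lemma piece_index_exists:
  "\<exists>j \<le> K + 2. (0 < j \<longrightarrow> y \<le> b j) \<and> (j < K + 2 \<longrightarrow> b (Suc j) \<le> y) \<and> (b (Suc K) \<le> y \<longrightarrow> j \<le> K)"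
proof (cases "b 1 \<le> y")
  case True
  then show ?thesis by (intro exI[of _ 0]) auto
next
  case False
  define r where "r = (m - y) / v"
  have r1: "r > 1" using False vpos by (simp add: r_def breakpoint_def field_simps)
  have c1: "of_int \<lceil>r\<rceil> - 1 < r" "r \<le> of_int \<lceil>r\<rceil>" using ceiling_correct[of r] by auto
  have cpos: "\<lceil>r\<rceil> \<ge> 2" using r1 c1 by linarith
  define j where "j = nat \<lceil>r\<rceil> - 1"
  have n1: "real (nat \<lceil>r\<rceil>) = of_int \<lceil>r\<rceil>" using cpos by simp
  have n2: "1 \<le> nat \<lceil>r\<rceil>" using cpos by (auto simp: le_nat_iff)
  have "real (nat \<lceil>r\<rceil> - 1) = real (nat \<lceil>r\<rceil>) - 1" using n2 by (subst of_nat_diff) auto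
  then have jr: "real j = of_int \<lceil>r\<rceil> - 1" using n1 by (simp add: j_def)
  have n3: "2 \<le> nat \<lceil>r\<rceil>" using cpos by (auto simp: le_nat_iff)
  have jpos: "j \<ge> 1" using n3 by (simp add: j_def)
  have "real j < r" using jr c1 by linarith
  then have "real j * v < m - y" using vpos by (simp add: r_def field_simps)
  then have A: "y < b j" by (simp add: breakpoint_def)
  have "r \<le> real j + 1" using jr c1 by linarith
  then have "m - y \<le> (real j + 1) * v" using vpos by (simp add: r_def field_simps)
  then have B: "b (Suc j) \<le> y" by (simp add: breakpoint_def algebra_simps)
  show ?thesis
  proof (cases "j \<le> K + 2")
    case True
    have "b (Suc K) \<le> y \<longrightarrow> j \<le> K"
    proof
      assume h: "b (Suc K) \<le> y"
      show "j \<le> K"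
      proof (rule ccontr)
        assume "\<not> j \<le> K"
        then have "Suc K \<le> j" by simp
        then have "b j \<le> b (Suc K)" by (rule b_mono)
        then show False using A h by simp
      qed
    qed
    then show ?thesis using True A B jpos by (intro exI[of _ j]) auto
  next
    case False
    have "b j \<le> b (K + 2)" using False by (intro b_mono) simp
    moreover have "b (K + 2) \<le> b (Suc K)" by (intro b_mono) simp
    ultimately show ?thesis using A by (intro exI[of _ "K + 2"]) auto
  qed
qed

lemma W_concave:
  assumes "0 \<le> t" "t \<le> 1"
  shows "t * W x + (1 - t) * W y \<le> W (t * x + (1 - t) * y)"
proof -
  obtain j where j: "j \<le> K + 2" "W (t * x + (1 - t) * y) = l j (t * x + (1 - t) * y)"
    using W_attained by blast
  have a1: "l j (t * x + (1 - t) * y) = l j x + s j * (t * x + (1 - t) * y - x)" by (rule piece_affine)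
  have a2: "l j y = l j x + s j * (y - x)" by (rule piece_affine)
  have "l j (t * x + (1 - t) * y) = t * l j x + (1 - t) * l j y"
    unfolding a1 a2 by (simp add: algebra_simps)
  moreover have "t * W x \<le> t * l j x" using W_le_piece[OF j(1)] assms by (intro mult_left_mono) auto
  moreover have "(1 - t) * W y \<le> (1 - t) * l j y" using W_le_piece[OF j(1)] assms by (intro mult_left_mono) auto
  ultimately show ?thesis using j by linarith
qed

lemma W_lipschitz: "\<bar>W y - W z\<bar> \<le> (1 + \<mu>) * \<bar>y - z\<bar>"
proof -
  have one: "W y - W z \<le> (1 + \<mu>) * \<bar>y - z\<bar>" for y z
  proof -
    obtain j where j: "j \<le> K + 2" "W z = l j z" using W_attained by blast
    have "W y \<le> l j y" using W_le_piece[OF j(1)] .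
    also have "\<dots> = l j z + s j * (y - z)" by (rule piece_affine)
    also have "s j * (y - z) \<le> \<bar>s j\<bar> * \<bar>y - z\<bar>" by (metis abs_ge_self abs_mult)
    also have "\<bar>s j\<bar> \<le> 1 + \<mu>" using s_ge[of j] s_upper[of j] mu by auto
    then have "\<bar>s j\<bar> * \<bar>y - z\<bar> \<le> (1 + \<mu>) * \<bar>y - z\<bar>" by (intro mult_right_mono) auto
    finally show ?thesis using j by linarith
  qed
  show ?thesis using one[of y z] one[of z y] by (simp add: abs_minus_commute abs_le_iff)
qed

lemma W_continuous_on: "continuous_on A W"
proof -
  have "(1 + \<mu>)-lipschitz_on A W"
    by (rule lipschitz_onI) (use W_lipschitz mu in \<open>auto simp: dist_real_def\<close>)
  then show ?thesis by (rule lipschitz_on_continuous_on)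
qed

lemma W_0: "W 0 = 0"
proof -
  have "b 1 \<le> 0" using mv by (simp add: breakpoint_def)
  then show ?thesis using W_eq_piece[of 0 0] by simp
qed

lemma W_neg: "y > 0 \<Longrightarrow> W y < 0"
  using W_le_piece[of 0 y] by simp

lemma W_plus_id_mono: "y1 \<le> y2 \<Longrightarrow> W y1 + y1 \<le> W y2 + y2"
proof -
  assume y: "y1 \<le> y2"
  obtain j where j: "j \<le> K + 2" "W y2 = l j y2" using W_attained by blast
  have "W y1 \<le> l j y1" using W_le_piece[OF j(1)] .
  also have "\<dots> = l j y2 + s j * (y1 - y2)" by (rule piece_affine)
  also have "s j * (y1 - y2) \<le> (-1) * (y1 - y2)"
    using s_ge[of j] y by (intro mult_right_mono_neg) auto
  finally show ?thesis using j by simp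
qed

lemma W_nonneg_right: "W y1 \<ge> 0 \<Longrightarrow> y1 \<le> y \<Longrightarrow> y \<le> 0 \<Longrightarrow> W y \<ge> 0"
proof -
  assume a: "W y1 \<ge> 0" "y1 \<le> y" "y \<le> 0"
  show "W y \<ge> 0"
  proof (cases "y1 = 0")
    case True then show ?thesis using a W_0 by simp
  next
    case False
    then have y1n: "y1 < 0" using a by simp
    define t where "t = y / y1"
    have t: "0 \<le> t" "t \<le> 1" using a y1n by (auto simp: t_def field_simps)
    have "t * y1 + (1 - t) * 0 = y" using y1n by (simp add: t_def)
    then have "t * W y1 + (1 - t) * W 0 \<le> W y" using W_concave[OF t, of y1 0] by simp
    then show ?thesis using W_0 a t by (smt (verit) mult_nonneg_nonneg)
  qed
qed

lemma W_nonneg_between: "W x \<ge> 0 \<Longrightarrow> W z \<ge> 0 \<Longrightarrow> x \<le> y \<Longrightarrow> y \<le> z \<Longrightarrow> W y \<ge> 0"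
proof -
  assume a: "W x \<ge> 0" "W z \<ge> 0" "x \<le> y" "y \<le> z"
  show "W y \<ge> 0"
  proof (cases "x = z")
    case True then show ?thesis using a by simp
  next
    case False
    then have xz: "x < z" using a by simp
    define t where "t = (z - y) / (z - x)"
    have t: "0 \<le> t" "t \<le> 1" using a xz by (auto simp: t_def field_simps)
    have zt: "t * (z - x) = z - y" using xz by (simp add: t_def)
    have "t * x + (1 - t) * z = z - t * (z - x)" by algebra
    then have "t * x + (1 - t) * z = y" using zt by simp
    then have "t * W x + (1 - t) * W z \<le> W y" using W_concave[OF t, of x z] by simp
    then show ?thesis using a t by (smt (verit) mult_nonneg_nonneg)
  qed
qed

text \<open>The 1-Lipschitz envelope of \<open>W\<close>: where the slopes of \<open>W\<close> lie in \<open>[-1, 1]\<close> it is \<open>W\<close>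
  itself, and left of the last kink it continues with slope 1.\<close>

definition env :: "real \<Rightarrow> real" where
  "env x = (if b (Suc K) \<le> x then W x else W (b (Suc K)) + x - b (Suc K))"

lemma W_at_last_kink: "W (b (Suc K)) = l K (b (Suc K))" "W (b (Suc K)) = l (Suc K) (b (Suc K))"
proof -
  show "W (b (Suc K)) = l K (b (Suc K))"
    by (rule W_eq_piece) (auto intro: b_mono)
  show "W (b (Suc K)) = l (Suc K) (b (Suc K))"
    by (rule W_eq_piece) (auto intro: b_mono)
qed

lemma W_minus_dist_le_env: "W y - \<bar>x - y\<bar> \<le> env x"
proof (cases "b (Suc K) \<le> x")
  case True
  obtain j where j: "j \<le> K + 2" "0 < j \<longrightarrow> x \<le> b j" "j < K + 2 \<longrightarrow> b (Suc j) \<le> x" "j \<le> K"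
    using piece_index_exists[of x] True by blast
  have Wx: "W x = l j x" using W_eq_piece j by simp
  have "W y \<le> l j y" using W_le_piece j by simp
  also have "\<dots> = W x + s j * (y - x)" using piece_affine[of j y x] Wx by simp
  also have "s j * (y - x) \<le> \<bar>s j\<bar> * \<bar>y - x\<bar>" by (metis abs_ge_self abs_mult)
  also have "\<bar>s j\<bar> * \<bar>y - x\<bar> \<le> 1 * \<bar>y - x\<bar>"
    using s_ge[of j] s_le[of j] j by (intro mult_right_mono) auto
  finally show ?thesis using True by (simp add: env_def abs_minus_commute)
next
  case False
  define e where "e = b (Suc K)"
  have "W y \<le> W e + (y - e)"
  proof (cases "e \<le> y")
    case True
    have a: "W y \<le> l K y" by (rule W_le_piece) simp
    have b: "l K y = l K e + s K * (y - e)" by (rule piece_affine)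
    have c: "l K e = W e" unfolding e_def by (rule W_at_last_kink(1)[symmetric])
    have d: "s K * (y - e) \<le> y - e" using mult_right_mono[of "s K" 1 "y - e"] s_le[of K] True by simp
    show ?thesis using a b c d by linarith
  next
    case F2: False
    have a: "W y \<le> l (Suc K) y" by (rule W_le_piece) simp
    have b: "l (Suc K) y = l (Suc K) e + s (Suc K) * (y - e)" by (rule piece_affine)
    have c: "l (Suc K) e = W e" unfolding e_def by (rule W_at_last_kink(2)[symmetric])
    have d: "s (Suc K) * (y - e) \<le> y - e" using mult_right_mono_neg[of 1 "s (Suc K)" "y - e"] s_K1 F2 by simp
    show ?thesis using a b c d by linarith
  qed
  then show ?thesis using False by (simp add: env_def e_def)
qed

lemma piece_deriv: "(l j has_real_derivative s j) (at x)"
proof -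
  have "l j = (\<lambda>y. l j 0 + s j * (y - 0))" by (rule ext) (rule piece_affine)
  moreover have "((\<lambda>y. l j 0 + s j * (y - 0)) has_real_derivative s j) (at x)"
    by (auto intro!: derivative_eq_intros)
  ultimately show ?thesis by simp
qed

lemma W_has_derivative_piece:
  assumes j: "j \<le> K + 2" and a: "0 < j \<Longrightarrow> x < b j" and c: "j < K + 2 \<Longrightarrow> b (Suc j) < x"
  shows "(W has_real_derivative s j) (at x)"
proof -
  define d where "d = min (if 0 < j then b j - x else 1) (if j < K + 2 then x - b (Suc j) else 1)"
  have "0 < d" using a c by (simp add: d_def)
  moreover have "l j y = W y" if "dist y x < d" for y
    using that by (intro W_eq_piece[OF j, symmetric]) (auto simp: d_def dist_real_def split: if_splits)
  ultimately show ?thesis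
    using has_field_derivative_transform_within[OF piece_deriv[of j x]] by fastforce
qed

lemma W_differentiable:
  assumes "x \<notin> b ` {1..K + 2}"
  shows "\<exists>d. (W has_real_derivative d) (at x)"
proof -
  from piece_index_exists[of x] obtain j where
    "j \<le> K + 2 \<and> (0 < j \<longrightarrow> x \<le> b j) \<and> (j < K + 2 \<longrightarrow> b (Suc j) \<le> x) \<and> (b (Suc K) \<le> x \<longrightarrow> j \<le> K)"
    by (elim exE)
  then have j: "j \<le> K + 2" "0 < j \<longrightarrow> x \<le> b j" "j < K + 2 \<longrightarrow> b (Suc j) \<le> x"
    by simp_all
  have ne: "x \<noteq> b i" if "1 \<le> i" "i \<le> K + 2" for i
    using assms that by auto
  have "(W has_real_derivative s j) (at x)"
  proof (rule W_has_derivative_piece[OF j(1)])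
    show "x < b j" if "0 < j"
    proof (rule order.not_eq_order_implies_strict)
      show "x \<noteq> b j" using ne[of j] j(1) that by simp
      show "x \<le> b j" using j(2) that by simp
    qed
    show "b (Suc j) < x" if "j < K + 2"
    proof (rule order.not_eq_order_implies_strict)
      show "b (Suc j) \<noteq> x" using ne[of "Suc j"] that by simp
      show "b (Suc j) \<le> x" using j(3) that by simp
    qed
  qed
  then show ?thesis by blast
qed

end

section \<open>The profile solves the wave recursion\<close>

locale wave_recursion = piecewise_profile +
  fixes \<gamma> S :: real
  assumes ga: "0 < \<gamma>" "\<gamma> < 1" and kink: "m = min S v"
    and speed_rel: "1 - \<gamma> - \<mu> * max (S - v) 0 = v" and speed_case: "S \<le> v \<or> \<mu> < 1"
begin

definition gain :: "real \<Rightarrow> real" where "gain x = 1 - \<gamma> - \<mu> * max (S - x) 0"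

lemma speed_eq_kink: "v = 1 - \<gamma> - \<mu> * (S - m)"
proof (cases "S \<le> v")
  case True then show ?thesis using speed_rel kink by (simp add: max_def)
next
  case False then show ?thesis using speed_rel kink by (simp add: max_def)
qed

lemma first_breakpoint: "b 1 = m - v" "b 1 \<le> 0"
  using mv by (simp_all add: breakpoint_def)

lemma last_kink_le_first: "b (Suc K) \<le> b 1" by (intro b_mono) simp

lemma piece_Suc_recursion:
  assumes j: "j \<le> K" and x: "x < S"
  shows "l (Suc j) (x - v) = gain x + l j x"
proof -
  have sj: "s j = real j * \<mu> - 1" using j by (intro s_lin) simp
  have sj1: "s (Suc j) = (real j + 1) * \<mu> - 1" using j s_lin[of "Suc j"] by simp
  have a: "l j (b (Suc j)) = l j x + s j * (b (Suc j) - x)" by (rule piece_affine)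
  have l1: "l (Suc j) (x - v) = l j (b (Suc j)) + s (Suc j) * (x - v - b (Suc j))" by simp
  have bs: "b (Suc j) = m - (real j + 1) * v" by (simp add: breakpoint_def)
  have "l (Suc j) (x - v) = l j x + s j * (b (Suc j) - x) + s (Suc j) * (x - v - b (Suc j))"
    using l1 a by simp
  also have "\<dots> = l j x + (real j * \<mu> - 1) * (m - (real j + 1) * v - x)
       + ((real j + 1) * \<mu> - 1) * (x - v - (m - (real j + 1) * v))"
    unfolding sj sj1 bs by simp
  also have "\<dots> = l j x + v - \<mu> * (m - x)" by (simp add: algebra_simps)
  also have "\<dots> = gain x + l j x" using speed_eq_kink x by (simp add: gain_def max_def algebra_simps)
  finally show ?thesis .
qed

lemma W_eq_first_piece: "y \<ge> b 1 \<Longrightarrow> W y = - y"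
  using W_eq_piece[of 0 y] by simp

lemma env_right: "x \<ge> b 1 \<Longrightarrow> env x = - x"
  using W_eq_first_piece last_kink_le_first by (simp add: env_def)

lemma W_recursion_middle:
  assumes xS: "x < S" and x0: "x \<le> 0" and xK: "b (Suc K) \<le> x"
  shows "W (x - v) = gain x + env x"
proof -
  have xm: "x \<le> m" using xS x0 vpos kink by auto
  obtain j where j: "j \<le> K + 2" "0 < j \<longrightarrow> x \<le> b j" "j < K + 2 \<longrightarrow> b (Suc j) \<le> x" "j \<le> K"
    using piece_index_exists[of x] xK by blast
  have Wx: "W x = l j x" using W_eq_piece j by simp
  have Dx: "env x = l j x" using xK Wx by (simp add: env_def)
  have "W (x - v) = l (Suc j) (x - v)"
  proof (rule W_eq_piece)
    show "Suc j \<le> K + 2" using j by simp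
    show "x - v \<le> b (Suc j)"
    proof (cases "j = 0")
      case True then show ?thesis using xm by (simp add: breakpoint_def)
    next
      case False then show ?thesis using j by (simp add: b_Suc)
    qed
    show "b (Suc (Suc j)) \<le> x - v" using j by (simp add: b_Suc)
  qed
  then show ?thesis using piece_Suc_recursion[OF j(4) xS] Dx by simp
qed

lemma W_recursion_far_left:
  assumes xK: "x < b (Suc K)"
  shows "W (x - v) = gain x + env x"
proof -
  define e where "e = b (Suc K)"
  have xe: "x < e" using xK by (simp add: e_def)
  have eS: "e < S"
  proof -
    have "e \<le> b 1" using last_kink_le_first by (simp add: e_def)
    then show ?thesis using first_breakpoint vpos kink by auto
  qed
  have Dx: "env x = W e + x - e" using xK by (simp add: env_def e_def)
  have W1: "W (x - v) = l (K + 2) (x - v)"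
    by (rule W_eq_piece) (use xe in \<open>auto simp: e_def b_Suc\<close>)
  have a1: "l (K + 2) (x - v) = l (K + 2) (e - v) + s (K + 2) * (x - e)"
    using piece_affine[of "K + 2" "x - v" "e - v"] by simp
  have a2: "l (K + 2) (e - v) = l (Suc K) (e - v)"
    by (simp add: e_def b_Suc)
  have a3: "l (Suc K) (e - v) = gain e + l K e" using piece_Suc_recursion[of K e] eS by simp
  have a4: "l K e = W e" using W_at_last_kink(1) by (simp add: e_def)
  have a5: "gain x = gain e + \<mu> * (x - e)" using xe eS by (simp add: gain_def max_def algebra_simps)
  show "W (x - v) = gain x + env x"
    using W1 a1 a2 a3 a4 a5 Dx s_N by (simp add: algebra_simps)
qed

lemma W_recursion_beyond_front:
  assumes xS: "S \<le> x"
  shows "(W (x - v) = gain x + env x) \<or> (W (x - v) < 0 \<and> gain x + env x < 0)"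
proof -
  have gx: "gain x = 1 - \<gamma>" using xS by (simp add: gain_def max_def)
  show ?thesis
  proof (cases "S \<le> v")
    case True
    then have m: "m = S" and vg: "v = 1 - \<gamma>" using kink speed_rel by (simp_all add: max_def)
    have "x \<ge> b 1" "x - v \<ge> b 1" using first_breakpoint m xS vpos by simp_all
    then show ?thesis using gx vg env_right W_eq_first_piece by simp
  next
    case False
    then have "\<mu> < 1" using speed_case by simp
    then have "\<mu> * (S - v) < 1 * (S - v)" using False by (intro mult_strict_right_mono) auto
    moreover have "1 - \<gamma> = v + \<mu> * (S - v)" using speed_rel False by (simp add: max_def)
    ultimately have "1 - \<gamma> < S" by simp
    then have "1 - \<gamma> < x" using xS by simp
    moreover have "env x = - x" using xS False vpos first_breakpoint by (intro env_right) simp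
    ultimately have "gain x + env x < 0" using gx by simp
    moreover have "W (x - v) < 0" using W_neg xS False by simp
    ultimately show ?thesis by simp
  qed
qed

lemma W_recursion_positive:
  assumes xS: "x < S" and xpos: "0 < x"
  shows "(W (x - v) = gain x + env x) \<or> (W (x - v) < 0 \<and> gain x + env x < 0)"
proof -
  have "env x = - x" using xpos first_breakpoint by (intro env_right) simp
  then have id1: "l 1 (x - v) = gain x + env x" using piece_Suc_recursion[of 0 x] xS by simp
  show ?thesis
  proof (cases "x \<le> m")
    case True
    have "W (x - v) = l 1 (x - v)"
      by (rule W_eq_piece) (use True xpos first_breakpoint in \<open>auto simp: breakpoint_def\<close>)
    then show ?thesis using id1 by simp
  next
    case False
    then have m: "m = v" "v < S" using kink xS by (auto simp: min_def split: if_splits)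
    then have "\<mu> < 1" using speed_case by simp
    moreover have xv: "x > v" using False m by simp
    ultimately have "(\<mu> - 1) * (x - v) < 0" by (simp add: mult_neg_pos)
    moreover have "l 1 (x - v) = (\<mu> - 1) * (x - v)"
      using m by (simp add: breakpoint_def slope_def)
    moreover have "W (x - v) < 0" using W_neg xv by simp
    ultimately show ?thesis using id1 by simp
  qed
qed

lemma W_recursion_cases: "(W (x - v) = gain x + env x) \<or> (W (x - v) < 0 \<and> gain x + env x < 0)"
proof (cases "S \<le> x")
  case True
  then show ?thesis by (rule W_recursion_beyond_front)
next
  case False
  then have xS: "x < S" by simp
  show ?thesis
  proof (cases "x \<le> 0")
    case True
    then show ?thesis
      using W_recursion_middle[OF xS True] W_recursion_far_left by (cases "b (Suc K) \<le> x") auto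
  next
    case False
    then show ?thesis using W_recursion_positive[OF xS] by simp
  qed
qed

lemma lip_env_cutoff_le_env: "lip_env (cutoff W) x \<le> ereal (env x)"
  unfolding lip_env_def
proof (rule SUP_least)
  fix y
  show "cutoff W y - ereal \<bar>x - y\<bar> \<le> ereal (env x)"
    using W_minus_dist_le_env[of y x] by (simp add: cutoff_def piop_ereal)
qed

lemma cutoff_recursion: "cutoff W (x - v) = piop (ereal (gain x) + lip_env (cutoff W) x)"
proof (cases "W (x - v) \<ge> 0")
  case True
  then have eq: "W (x - v) = gain x + env x" using W_recursion_cases[of x] by auto
  have W0': "W 0 \<ge> 0" using W_0 by simp
  have "ereal (env x) \<le> lip_env (cutoff W) x"
  proof (cases "x > 0")
    case True
    have "env x = - x" using True first_breakpoint by (intro env_right) simp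
    then show ?thesis using lip_env_ge[of "cutoff W" 0 x] True W_0 by (simp add: cutoff_def piop_ereal)
  next
    case False
    show ?thesis
    proof (cases "b (Suc K) \<le> x")
      case True
      have "W x \<ge> 0" using W_nonneg_between[of "x - v" 0 x] \<open>W (x - v) \<ge> 0\<close> W0' False vpos by simp
      then show ?thesis using lip_env_ge[of "cutoff W" x x] True by (simp add: cutoff_def piop_ereal env_def)
    next
      case F2: False
      define e where "e = b (Suc K)"
      have e0: "e \<le> 0" using last_kink_le_first first_breakpoint by (simp add: e_def)
      have "W e \<ge> 0" using W_nonneg_between[of "x - v" 0 e] \<open>W (x - v) \<ge> 0\<close> W0' F2 e0 vpos
        by (simp add: e_def)
      have d1: "env x = W e - \<bar>x - e\<bar>" using F2 by (simp add: env_def e_def)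
      have d2: "cutoff W e = ereal (W e)" using \<open>W e \<ge> 0\<close> by (simp add: cutoff_def piop_ereal)
      show ?thesis using lip_env_ge[of "cutoff W" e x] d1 d2 by simp
    qed
  qed
  then have "lip_env (cutoff W) x = ereal (env x)" using lip_env_cutoff_le_env by (intro antisym) auto
  then show ?thesis using eq True by (simp add: cutoff_def piop_ereal)
next
  case False
  have neg: "gain x + env x < 0" using W_recursion_cases[of x] False by auto
  have "ereal (gain x) + lip_env (cutoff W) x \<le> ereal (gain x) + ereal (env x)"
    using lip_env_cutoff_le_env by (intro add_left_mono)
  also have "\<dots> < 0" using neg by simp
  finally have "piop (ereal (gain x) + lip_env (cutoff W) x) = -\<infinity>" by (rule piop_neg)
  then show ?thesis using False by (simp add: cutoff_def piop_ereal)
qed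

lemma anchored_cutoff: "anchored (cutoff W)"
proof
  fix y show "cutoff W y \<noteq> \<infinity>" by (simp add: cutoff_def piop_ereal)
next
  fix y :: real assume "y > 0" then show "cutoff W y = -\<infinity>"
    using W_neg[OF \<open>y > 0\<close>] by (simp add: cutoff_def piop_ereal)
next
  show "cutoff W 0 = 0" using W_0 by (simp add: cutoff_def piop_ereal zero_ereal_def)
next
  fix y1 y2 :: real assume a: "y1 \<le> y2" "y2 \<le> 0" "cutoff W y1 \<noteq> -\<infinity>"
  then have w1: "W y1 \<ge> 0" by (simp add: cutoff_def piop_ereal split: if_splits)
  then have w2: "W y2 \<ge> 0" using W_nonneg_right a by blast
  show "cutoff W y1 + ereal y1 \<le> cutoff W y2 + ereal y2"
    using W_plus_id_mono[OF a(1)] w1 w2 by (simp add: cutoff_def piop_ereal)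
qed


lemma W_breakpoint: "1 \<le> j \<Longrightarrow> j \<le> K + 2 \<Longrightarrow> W (b j) = (v - m) + v * ((real j - 1) - \<mu> * real j * (real j - 1) / 2)"
proof -
  assume j: "1 \<le> j" "j \<le> K + 2"
  have W: "W (b j) = l j (b j)" using j by (intro W_eq_piece) (auto intro: b_mono)
  have "l j (b j) = (v - m) + v * ((real j - 1) - \<mu> * real j * (real j - 1) / 2)" using j
  proof (induction j)
    case 0 then show ?case by simp
  next
    case (Suc i)
    show ?case
    proof (cases "i = 0")
      case True then show ?thesis by (simp add: breakpoint_def)
    next
      case False
      then have IH: "l i (b i) = (v - m) + v * ((real i - 1) - \<mu> * real i * (real i - 1) / 2)"
        using Suc by simp
      have si: "s i = real i * \<mu> - 1" using Suc.prems by (intro s_lin) simp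
      have e1: "l (Suc i) (b (Suc i)) = l i (b (Suc i))" by simp
      have e2: "l i (b (Suc i)) = l i (b i) + s i * (b (Suc i) - b i)" by (rule piece_affine)
      have e3: "b (Suc i) - b i = - v" by (simp add: b_Suc)
      have "l (Suc i) (b (Suc i)) = (v - m) + v * ((real i - 1) - \<mu> * real i * (real i - 1) / 2) - (real i * \<mu> - 1) * v"
        using e1 e2 e3 IH si by simp
      then show ?thesis by (simp add: field_simps)
    qed
  qed
  then show ?thesis using W by simp
qed

lemma W_breakpoint_nonneg:
  assumes "1 \<le> k" "k \<le> K" "real k * \<mu> \<le> 1"
  shows "0 \<le> W (b k)"
proof -
  have "(real k - 1) - \<mu> * real k * (real k - 1) / 2 = (real k - 1) * (1 - \<mu> * real k / 2)"
    by (simp add: algebra_simps)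
  moreover have "real k - 1 \<ge> 0" "1 - \<mu> * real k / 2 \<ge> 0" using assms by (auto simp: algebra_simps)
  ultimately show ?thesis using W_breakpoint[of k] assms mv vpos by simp
qed

lemma decay_env_cutoff_eq:
  assumes c: "c \<ge> 0" and sg: "\<And>y. W y \<le> W y0 - c * (y - y0)" and w0: "W y0 \<ge> 0" and x: "x \<ge> y0"
  shows "decay_env c (cutoff W) x = ereal (W y0 - c * (x - y0))"
proof (rule antisym)
  show "decay_env c (cutoff W) x \<le> ereal (W y0 - c * (x - y0))"
    unfolding decay_env_def
  proof (rule SUP_least)
    fix y
    show "cutoff W y - ereal (c * max (x - y) 0) \<le> ereal (W y0 - c * (x - y0))"
    proof (cases "W y \<ge> 0")
      case False then show ?thesis by (simp add: cutoff_def piop_ereal)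
    next
      case True
      have "W y - c * max (x - y) 0 \<le> W y0 - c * (x - y0)"
      proof (cases "x \<ge> y")
        case True
        then have "c * max (x - y) 0 = c * (x - y)" by simp
        then show ?thesis using sg[of y] by (simp add: algebra_simps)
      next
        case False
        have "c * (x - y0) \<le> c * (y - y0)" using False c by (intro mult_left_mono) auto
        then show ?thesis using sg[of y] False by simp
      qed
      then show ?thesis using True by (simp add: cutoff_def piop_ereal)
    qed
  qed
  have "cutoff W y0 - ereal (c * max (x - y0) 0) = ereal (W y0 - c * (x - y0))"
    using w0 x by (simp add: cutoff_def piop_ereal)
  moreover have "cutoff W y0 - ereal (c * max (x - y0) 0) \<le> decay_env c (cutoff W) x"
    unfolding decay_env_def by (rule SUP_upper) simp
  ultimately show "ereal (W y0 - c * (x - y0)) \<le> decay_env c (cutoff W) x" by simp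
qed

lemma decay_env_one_cutoff:
  assumes x: "x \<ge> b 1"
  shows "decay_env 1 (cutoff W) x = ereal (- x)"
proof -
  define y0 where "y0 = min x 0"
  have y0: "b 1 \<le> y0" "y0 \<le> 0" "y0 \<le> x" using x first_breakpoint by (auto simp: y0_def)
  have Wy0: "W y0 = - y0" using W_eq_first_piece y0 by simp
  have sg: "W y \<le> W y0 - 1 * (y - y0)" for y using W_le_piece[of 0 y] Wy0 by simp
  have "decay_env 1 (cutoff W) x = ereal (W y0 - 1 * (x - y0))"
    by (rule decay_env_cutoff_eq[OF _ sg]) (use y0 Wy0 in auto)
  then show ?thesis using Wy0 by simp
qed

lemma decay_env_mu_cutoff:
  assumes k: "1 \<le> k" "k \<le> K" "real k * \<mu> \<le> 1" "1 \<le> (real k + 1) * \<mu>"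
    and w: "W (b k) \<ge> 0" and x: "x \<ge> b k"
  shows "decay_env \<mu> (cutoff W) x = ereal (W (b k) - \<mu> * (x - b k))"
proof -
  have W1: "W (b k) = l (k - 1) (b k)"
  proof (rule W_eq_piece)
    show "k - 1 \<le> K + 2" using k(2) by arith
    show "0 < k - 1 \<Longrightarrow> b k \<le> b (k - 1)" by (rule b_mono) simp
    show "k - 1 < K + 2 \<Longrightarrow> b (Suc (k - 1)) \<le> b k" using k by simp
  qed
  have W2: "W (b k) = l k (b k)"
    by (rule W_eq_piece) (use k in \<open>auto intro: b_mono\<close>)
  have sk1: "s (k - 1) \<le> - \<mu>"
  proof -
    have "s (k - 1) = real (k - 1) * \<mu> - 1" using k by (intro s_lin) simp
    also have "real (k - 1) = real k - 1" using k by (simp add: of_nat_diff)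
    finally show ?thesis using k by (simp add: algebra_simps)
  qed
  have sk: "s k \<ge> - \<mu>" using k s_lin[of k] by (simp add: algebra_simps)
  have sg: "W y \<le> W (b k) - \<mu> * (y - b k)" for y
  proof (cases "y \<ge> b k")
    case True
    have "W y \<le> l (k - 1) y" using k(2) by (intro W_le_piece) arith
    also have "\<dots> = W (b k) + s (k - 1) * (y - b k)" using piece_affine[of "k - 1" y "b k"] W1 by simp
    also have "s (k - 1) * (y - b k) \<le> (- \<mu>) * (y - b k)" using sk1 True by (intro mult_right_mono) auto
    finally show ?thesis by simp
  next
    case False
    have "W y \<le> l k y" using k by (intro W_le_piece) simp
    also have "\<dots> = W (b k) + s k * (y - b k)" using piece_affine[of k y "b k"] W2 by simp
    also have "s k * (y - b k) \<le> (- \<mu>) * (y - b k)" using sk False by (intro mult_right_mono_neg) auto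
    finally show ?thesis by simp
  qed
  show ?thesis by (rule decay_env_cutoff_eq[OF _ sg w x]) (use mu in simp)
qed

end

lemma concave_ext_finite_between:
  assumes cc: "concave_ext g" and fin: "\<And>y. g y \<noteq> \<infinity>"
    and a: "g y1 \<noteq> -\<infinity>" "g y2 \<noteq> -\<infinity>" "y1 \<le> y" "y \<le> y2"
  shows "g y \<noteq> -\<infinity>"
proof (cases "y = y1 \<or> y = y2")
  case True then show ?thesis using a by auto
next
  case False
  then have lt: "y1 < y" "y < y2" using a by auto
  define t where "t = (y2 - y) / (y2 - y1)"
  have t: "0 < t" "t < 1" using lt by (auto simp: t_def field_simps)
  have zt: "t * (y2 - y1) = y2 - y" using lt by (simp add: t_def)
  have "t * y1 + (1 - t) * y2 = y2 - t * (y2 - y1)" by algebra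
  then have yy: "t * y1 + (1 - t) * y2 = y" using zt by simp
  obtain r1 r2 where r: "g y1 = ereal r1" "g y2 = ereal r2" using a fin by (metis ereal_real_cases)
  have "ereal t * g y1 + ereal (1 - t) * g y2 \<le> g y"
    using cc t yy unfolding concave_ext_def by metis
  then show ?thesis using r by auto
qed

lemma concave_ext_pos_between:
  assumes cc: "concave_ext g" and fin: "\<And>y. g y \<noteq> \<infinity>"
    and pos: "0 < g x" and nonneg: "0 \<le> g y" and xz: "x < z" and zy: "z < y"
  shows "0 < g z"
proof -
  define t where "t = (y - z) / (y - x)"
  have t: "0 < t" "t < 1" using xz zy by (auto simp: t_def field_simps)
  have "t * (y - x) = y - z" using xz zy by (simp add: t_def)
  then have z: "t * x + (1 - t) * y = z" by (simp add: algebra_simps)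
  obtain a where a: "g x = ereal a" using fin[of x] pos by (cases "g x") auto
  obtain b where b: "g y = ereal b" using fin[of y] nonneg by (cases "g y") auto
  have "0 < ereal (t * a + (1 - t) * b)" using t pos nonneg a b by (simp add: add_pos_nonneg)
  also have "\<dots> = ereal t * g x + ereal (1 - t) * g y" using a b by simp
  also have "\<dots> \<le> g z" using cc t unfolding concave_ext_def z[symmetric] by blast
  finally show ?thesis .
qed

lemma Sup_threshold_eq:
  assumes S: "Sup (ereal ` T) = ereal S'" and y0: "y0 < S'"
    and T: "\<And>x. x \<ge> y0 \<Longrightarrow> (x \<in> T \<longleftrightarrow> x \<le> x0)"
  shows "S' = x0"
proof (rule ccontr)
  assume ne: "S' \<noteq> x0"
  show False
  proof (cases "x0 > S'")
    case True
    define x where "x = (S' + x0) / 2"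
    have "x \<in> T" using T[of x] True y0 by (simp add: x_def)
    then have "ereal x \<le> Sup (ereal ` T)" by (rule SUP_upper)
    then have "ereal x \<le> ereal S'" using S by simp
    then show False using True by (simp add: x_def)
  next
    case False
    then have lt: "x0 < S'" using ne by simp
    have "Sup (ereal ` T) \<le> ereal (max y0 x0)"
    proof (rule SUP_least)
      fix x assume "x \<in> T"
      then have "x \<le> max y0 x0" using T[of x] by (cases "x \<ge> y0") auto
      then show "ereal x \<le> ereal (max y0 x0)" by (simp add: le_max_iff_disj)
    qed
    then show False using S lt y0 by (simp add: le_max_iff_disj)
  qed
qed

lemma Sup_eq_threshold:
  assumes y0: "y0 < x0" and T: "\<And>x. x \<ge> y0 \<Longrightarrow> (x \<in> T \<longleftrightarrow> x \<le> x0)"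
  shows "Sup (ereal ` T) = ereal x0"
proof (rule antisym)
  show "Sup (ereal ` T) \<le> ereal x0"
  proof (rule SUP_least)
    fix x assume "x \<in> T"
    then show "ereal x \<le> ereal x0" using T[of x] y0 by (cases "x \<ge> y0") auto
  qed
  have "x0 \<in> T" using T y0 by simp
  then show "ereal x0 \<le> Sup (ereal ` T)" by (rule SUP_upper)
qed

section \<open>The parameters of the wave\<close>

text \<open>The relation \<open>1 - \<gamma> - \<mu> (s - v)\<^sub>+ = v\<close> together with the threshold condition at the kink
  \<open>b\<^sub>k = min s v - k v\<close>, solved for \<open>v\<close> when \<open>s \<ge> v\<close> and for \<open>v - s\<close> when \<open>s < v\<close>, and the converse
  identities.\<close>

lemma speed_identity_i:
  fixes k \<mu> \<gamma> v S :: real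
  assumes h1: "1 - \<gamma> - \<mu> * (S - v) = v"
    and h2: "\<mu> * (S - (v - k * v)) = 1 - 2 * \<gamma> + v * ((k - 1) - \<mu> * k * (k - 1) / 2)"
  shows "v * (k * (2 - (k + 1) * \<mu>)) = 2 * \<gamma>"
proof -
  have "\<mu> * S = 1 - \<gamma> - v + \<mu> * v" using h1 by (simp add: algebra_simps)
  with h2 show ?thesis by (simp add: algebra_simps field_simps)
qed

lemma speed_identity_ii:
  fixes k \<mu> \<gamma> v S :: real
  assumes h1: "v = 1 - \<gamma>"
    and h2: "\<mu> * (S - (S - k * v)) = 1 - 2 * \<gamma> + ((v - S) + v * ((k - 1) - \<mu> * k * (k - 1) / 2))"
  shows "v - S = 1 - (1 - \<gamma>) * (k * (1 - (k + 1) / 2 * \<mu>) + 1)"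
  using h2 unfolding h1 by (simp add: algebra_simps field_simps)

lemma speed_identity_i_rev:
  fixes k \<mu> \<gamma> v S :: real
  assumes h1: "v * (k * (2 - (k + 1) * \<mu>)) = 2 * \<gamma>" and mu: "\<mu> \<noteq> 0"
    and h2: "S = v + (1 - \<gamma> - v) / \<mu>"
  shows "\<mu> * (S - (v - k * v)) = 1 - 2 * \<gamma> + v * ((k - 1) - \<mu> * k * (k - 1) / 2)"
proof -
  have "\<mu> * S = \<mu> * v + (1 - \<gamma> - v)" using h2 mu by (simp add: field_simps)
  with h1 show ?thesis by (simp add: algebra_simps field_simps)
qed

lemma speed_identity_ii_rev:
  fixes k \<mu> \<gamma> v S :: real
  assumes h1: "v = 1 - \<gamma>"
    and h2: "v - S = 1 - (1 - \<gamma>) * (k * (1 - (k + 1) / 2 * \<mu>) + 1)"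
  shows "\<mu> * (S - (S - k * v)) = 1 - 2 * \<gamma> + ((v - S) + v * ((k - 1) - \<mu> * k * (k - 1) / 2))"
  using h2 unfolding h1 by (simp add: algebra_simps field_simps)

locale wave_params =
  fixes \<gamma> \<mu> :: real
  assumes ga0: "0 < \<gamma>" and ga1: "\<gamma> < 1" and mu0: "0 < \<mu>" and mu1: "\<mu> \<noteq> 1"

context wave_params
begin

definition kN :: nat where "kN = nat \<lfloor>1 / \<mu>\<rfloor>"
definition KN :: nat where "KN = nat \<lfloor>2 / \<mu>\<rfloor>"

lemma kN_real: "real kN = kk \<mu>"
proof -
  have "\<lfloor>1 / \<mu>\<rfloor> \<ge> 0" using mu0 by simp
  then show ?thesis by (simp add: kN_def kk_def)
qed

lemma KN_real: "real KN = KK \<mu>"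
proof -
  have "\<lfloor>2 / \<mu>\<rfloor> \<ge> 0" using mu0 by simp
  then show ?thesis by (simp add: KN_def KK_def)
qed

lemma kN_bounds: "real kN * \<mu> \<le> 1" "1 < (real kN + 1) * \<mu>"
proof -
  have f: "\<lfloor>1 / \<mu>\<rfloor> \<ge> 0" using mu0 by simp
  have a: "real kN \<le> 1 / \<mu>" using f by (simp add: kN_def)
  have b: "1 / \<mu> < real kN + 1" using f by (simp add: kN_def)
  show "real kN * \<mu> \<le> 1" using a mu0 by (simp add: field_simps)
  show "1 < (real kN + 1) * \<mu>" using b mu0 by (simp add: field_simps)
qed

lemma KN_bounds: "real KN * \<mu> \<le> 2" "2 < (real KN + 1) * \<mu>"
proof -
  have f: "\<lfloor>2 / \<mu>\<rfloor> \<ge> 0" using mu0 by simp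
  have a: "real KN \<le> 2 / \<mu>" using f by (simp add: KN_def)
  have b: "2 / \<mu> < real KN + 1" using f by (simp add: KN_def)
  show "real KN * \<mu> \<le> 2" using a mu0 by (simp add: field_simps)
  show "2 < (real KN + 1) * \<mu>" using b mu0 by (simp add: field_simps)
qed

lemma kN_le_KN: "kN \<le> KN"
proof -
  have "\<lfloor>1 / \<mu>\<rfloor> \<le> \<lfloor>2 / \<mu>\<rfloor>" using mu0 by (intro floor_mono) (simp add: divide_right_mono)
  then show ?thesis by (simp add: kN_def KN_def nat_mono)
qed

lemma kN_pos: "\<mu> < 1 \<Longrightarrow> kN \<ge> 1"
proof -
  assume "\<mu> < 1"
  then have "1 \<le> 1 / \<mu>" using mu0 by (simp add: field_simps)
  then have "1 \<le> \<lfloor>1 / \<mu>\<rfloor>" by (simp add: le_floor_iff)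
  then have "nat 1 \<le> nat \<lfloor>1 / \<mu>\<rfloor>" by (rule nat_mono)
  then show ?thesis by (simp add: kN_def)
qed

lemma kN_zero: "\<mu> > 1 \<Longrightarrow> kN = 0"
proof -
  assume "\<mu> > 1"
  then have "1 / \<mu> < 1" using mu0 by (simp add: field_simps)
  then have "\<lfloor>1 / \<mu>\<rfloor> < 1" by (simp add: floor_less_iff)
  then show ?thesis by (simp add: kN_def)
qed

definition speed_denom :: real where "speed_denom = real kN * (2 - (real kN + 1) * \<mu>)"

lemma speed_denom_pos: "\<mu> < 1 \<Longrightarrow> speed_denom > 0"
proof -
  assume m1: "\<mu> < 1"
  have "(real kN + 1) * \<mu> = real kN * \<mu> + \<mu>" by (simp add: algebra_simps)
  then have "(real kN + 1) * \<mu> < 2" using kN_bounds m1 by linarith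
  then show ?thesis using kN_pos[OF m1] by (simp add: speed_denom_def)
qed

lemma two_plus_speed_denom: "2 + speed_denom = (real kN + 1) * (2 - real kN * \<mu>)"
  by (simp add: speed_denom_def algebra_simps)

lemma gamma_c_eq: "gamma_c \<mu> = speed_denom / (2 + speed_denom)"
proof -
  have nz: "2 - real kN * \<mu> \<noteq> 0" using kN_bounds by simp
  have nz2: "real kN + 1 \<noteq> 0" by simp
  have "gamma_c \<mu> = real kN / (real kN + 1) * (1 - \<mu> / (2 - real kN * \<mu>))"
    by (simp add: gamma_c_def kN_real)
  also have "\<dots> = real kN * (2 - real kN * \<mu> - \<mu>) / ((real kN + 1) * (2 - real kN * \<mu>))"
    using nz nz2 by (simp add: field_simps)
  also have "\<dots> = speed_denom / (2 + speed_denom)" by (simp add: two_plus_speed_denom speed_denom_def algebra_simps)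
  finally show ?thesis .
qed

lemma gamma_c_eq_0: "\<mu> > 1 \<Longrightarrow> gamma_c \<mu> = 0"
  using kN_zero by (simp add: gamma_c_def kN_real[symmetric])

lemma two_plus_speed_denom_pos: "2 + speed_denom > 0"
proof -
  have "2 - real kN * \<mu> > 0" using kN_bounds by simp
  then show ?thesis unfolding two_plus_speed_denom by simp
qed

lemma le_gamma_c_iff: "\<mu> < 1 \<Longrightarrow> (\<gamma> \<le> gamma_c \<mu>) = (2 * \<gamma> / speed_denom \<le> 1 - \<gamma>)"
proof -
  assume m1: "\<mu> < 1"
  have D: "speed_denom > 0" using speed_denom_pos[OF m1] .
  have "(\<gamma> \<le> speed_denom / (2 + speed_denom)) = (\<gamma> * (2 + speed_denom) \<le> speed_denom)" using two_plus_speed_denom_pos by (simp add: pos_le_divide_eq)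
  also have "\<dots> = (2 * \<gamma> \<le> (1 - \<gamma>) * speed_denom)" by (simp add: algebra_simps)
  also have "\<dots> = (2 * \<gamma> / speed_denom \<le> 1 - \<gamma>)" using D by (simp add: pos_divide_le_eq)
  finally show ?thesis by (simp add: gamma_c_eq)
qed

lemma front_gap_eq: "1 - (1 - \<gamma>) * (kk \<mu> * (1 - (kk \<mu> + 1) / 2 * \<mu>) + 1) = 1 - (1 - \<gamma>) * (2 + speed_denom) / 2"
  by (simp add: speed_denom_def kN_real field_simps)

lemma gamma_c_less_iff: "(\<gamma> > gamma_c \<mu>) = (1 - (1 - \<gamma>) * (2 + speed_denom) / 2 > 0)"
proof -
  have "(\<gamma> > speed_denom / (2 + speed_denom)) = (\<gamma> * (2 + speed_denom) > speed_denom)" using two_plus_speed_denom_pos by (simp add: divide_less_eq)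
  also have "\<dots> = (1 - (1 - \<gamma>) * (2 + speed_denom) / 2 > 0)" by (simp add: algebra_simps)
  finally show ?thesis by (simp add: gamma_c_eq)
qed

text \<open>\<open>speed\<close> and \<open>front\<close> are the \<open>v\<close> and \<open>s\<close> of the theorem; in case (i) \<open>front\<close> solves
  \<open>1 - \<gamma> - \<mu> (s - v) = v\<close>.\<close>

definition speed :: real where
  "speed = (if \<gamma> \<le> gamma_c \<mu> then 2 * \<gamma> / (kk \<mu> * (2 - (kk \<mu> + 1) * \<mu>)) else 1 - \<gamma>)"
definition front :: real where
  "front = (if \<gamma> \<le> gamma_c \<mu> then speed + (1 - \<gamma> - speed) / \<mu>
         else speed - (1 - (1 - \<gamma>) * (kk \<mu> * (1 - (kk \<mu> + 1) / 2 * \<mu>) + 1)))"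
definition kink :: real where "kink = min front speed"
abbreviation wave :: "real \<Rightarrow> real" where "wave \<equiv> profile \<mu> KN kink speed"

lemma speed_i: "\<gamma> \<le> gamma_c \<mu> \<Longrightarrow> speed = 2 * \<gamma> / speed_denom"
  by (simp add: speed_def speed_denom_def kN_real)

lemma case_i_mu_less_1: "\<gamma> \<le> gamma_c \<mu> \<Longrightarrow> \<mu> < 1"
proof (rule ccontr)
  assume "\<gamma> \<le> gamma_c \<mu>" "\<not> \<mu> < 1"
  then have "\<mu> > 1" using mu1 by simp
  then show False using gamma_c_eq_0 \<open>\<gamma> \<le> gamma_c \<mu>\<close> ga0 by simp
qed

lemma pfun_ge_gamma_iff:
  assumes P: "decay_env (min 1 \<mu>) g x = ereal p"
  shows "(ereal \<gamma> \<le> pfun \<gamma> \<mu> g x) = (2 * \<gamma> - 1 \<le> p)"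
proof -
  have "pfun \<gamma> \<mu> g x = piop (ereal (1 - \<gamma> + p))" by (simp add: pfun_decay_env P)
  then show ?thesis using ereal_le_piop_iff[OF ga0, of "1 - \<gamma> + p"] by auto
qed

lemma affine_threshold_iff:
  assumes c: "c > 0"
  shows "(2 * \<gamma> - 1 \<le> w - c * (x - y0)) = (x \<le> y0 + (1 - 2 * \<gamma> + w) / c)"
proof -
  have "(2 * \<gamma> - 1 \<le> w - c * (x - y0)) = (c * (x - y0) \<le> 1 - 2 * \<gamma> + w)" by linarith
  also have "\<dots> = (x - y0 \<le> (1 - 2 * \<gamma> + w) / c)" using c by (simp add: pos_le_divide_eq mult.commute)
  finally show ?thesis by linarith
qed

end

section \<open>Existence\<close>

context wave_params
begin

lemma speed_pos: "speed > 0"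
proof (cases "\<gamma> \<le> gamma_c \<mu>")
  case True
  then show ?thesis using speed_i speed_denom_pos[OF case_i_mu_less_1[OF True]] ga0 by simp
next
  case False then show ?thesis using ga1 by (simp add: speed_def)
qed

lemma case_ii_front_gap: "\<not> \<gamma> \<le> gamma_c \<mu> \<Longrightarrow> speed - front = 1 - (1 - \<gamma>) * (2 + speed_denom) / 2 \<and> speed - front > 0"
proof -
  assume g: "\<not> \<gamma> \<le> gamma_c \<mu>"
  have "speed - front = 1 - (1 - \<gamma>) * (kk \<mu> * (1 - (kk \<mu> + 1) / 2 * \<mu>) + 1)" using g by (simp add: front_def)
  then have "speed - front = 1 - (1 - \<gamma>) * (2 + speed_denom) / 2" using front_gap_eq by simp
  moreover have "1 - (1 - \<gamma>) * (2 + speed_denom) / 2 > 0" using gamma_c_less_iff g by simp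
  ultimately show ?thesis by simp
qed

lemma speed_rel_wave: "1 - \<gamma> - \<mu> * max (front - speed) 0 = speed"
proof (cases "\<gamma> \<le> gamma_c \<mu>")
  case True
  have m1: "\<mu> < 1" using case_i_mu_less_1[OF True] .
  have v1: "speed \<le> 1 - \<gamma>" using le_gamma_c_iff[OF m1] True speed_i[OF True] by simp
  have "front - speed = (1 - \<gamma> - speed) / \<mu>" using True by (simp add: front_def)
  moreover have "(1 - \<gamma> - speed) / \<mu> \<ge> 0" using v1 mu0 by simp
  ultimately show ?thesis using mu0 by (simp add: max_def)
next
  case False
  then have "front < speed" using case_ii_front_gap by simp
  then show ?thesis using False by (simp add: max_def speed_def)
qed

lemma case_i_facts: "\<gamma> \<le> gamma_c \<mu> \<Longrightarrow> \<mu> < 1 \<and> speed \<le> 1 - \<gamma> \<and> speed \<le> front \<and> kink = speed"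
proof -
  assume True: "\<gamma> \<le> gamma_c \<mu>"
  have m1: "\<mu> < 1" using case_i_mu_less_1[OF True] .
  have v1: "speed \<le> 1 - \<gamma>" using le_gamma_c_iff[OF m1] True speed_i[OF True] by simp
  have "front - speed = (1 - \<gamma> - speed) / \<mu>" using True by (simp add: front_def)
  moreover have "(1 - \<gamma> - speed) / \<mu> \<ge> 0" using v1 mu0 by simp
  ultimately have "speed \<le> front" by simp
  then show ?thesis using m1 v1 by (simp add: kink_def)
qed

lemma speed_case_wave: "front \<le> speed \<or> \<mu> < 1"
proof (cases "\<gamma> \<le> gamma_c \<mu>")
  case True then show ?thesis using case_i_mu_less_1 by simp
next
  case False then show ?thesis using case_ii_front_gap by simp
qed

sublocale W: wave_recursion \<mu> KN kink speed \<gamma> front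
  using mu0 speed_pos KN_bounds ga0 ga1 speed_rel_wave speed_case_wave by unfold_locales (auto simp: kink_def)

lemma wave_threshold_if_mu_gt_1:
  assumes m1: "\<mu> > 1" and x: "x \<ge> front - speed"
  shows "ereal \<gamma> \<le> pfun \<gamma> \<mu> (cutoff wave) x \<longleftrightarrow> x \<le> front"
proof -
  have "\<not> \<gamma> \<le> gamma_c \<mu>" using gamma_c_eq_0[OF m1] ga0 by simp
  moreover have "kk \<mu> = 0" using kN_zero[OF m1] kN_real by simp
  ultimately have fs: "front = 1 - 2 * \<gamma>" "speed = 1 - \<gamma>" by (simp_all add: front_def speed_def)
  then have "x \<ge> breakpoint kink speed 1" using x ga0 by (simp add: kink_def breakpoint_def)
  then have "decay_env (min 1 \<mu>) (cutoff wave) x = ereal (- x)" using W.decay_env_one_cutoff m1 by simp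
  then show ?thesis using pfun_ge_gamma_iff fs by auto
qed

lemma front_at_kink:
  assumes m1: "\<mu> < 1"
  shows "\<mu> * (front - breakpoint kink speed kN) = 1 - 2 * \<gamma> + wave (breakpoint kink speed kN)"
proof -
  have Wk: "wave (breakpoint kink speed kN)
      = (speed - kink) + speed * ((real kN - 1) - \<mu> * real kN * (real kN - 1) / 2)"
    using W.W_breakpoint[of kN] kN_pos[OF m1] kN_le_KN by simp
  show ?thesis
  proof (cases "\<gamma> \<le> gamma_c \<mu>")
    case True
    have "speed * (real kN * (2 - (real kN + 1) * \<mu>)) = 2 * \<gamma>"
      using speed_i[OF True] speed_denom_pos[OF m1] by (simp add: speed_denom_def field_simps)
    then have "\<mu> * (front - (speed - real kN * speed))
        = 1 - 2 * \<gamma> + speed * ((real kN - 1) - \<mu> * real kN * (real kN - 1) / 2)"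
      by (rule speed_identity_i_rev) (use mu0 True in \<open>simp_all add: front_def\<close>)
    then show ?thesis using Wk case_i_facts[OF True] by (simp add: breakpoint_def)
  next
    case False
    have "speed - front = 1 - (1 - \<gamma>) * (real kN * (1 - (real kN + 1) / 2 * \<mu>) + 1)"
      using False by (simp add: front_def kN_real)
    then have "\<mu> * (front - (front - real kN * speed))
        = 1 - 2 * \<gamma> + ((speed - front) + speed * ((real kN - 1) - \<mu> * real kN * (real kN - 1) / 2))"
      using False by (intro speed_identity_ii_rev) (simp_all add: speed_def)
    then show ?thesis using Wk case_ii_front_gap[OF False] by (simp add: breakpoint_def kink_def)
  qed
qed

lemma wave_threshold_if_mu_lt_1:
  assumes m1: "\<mu> < 1" and x: "x \<ge> breakpoint kink speed kN"
  shows "ereal \<gamma> \<le> pfun \<gamma> \<mu> (cutoff wave) x \<longleftrightarrow> x \<le> front"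
proof -
  have k: "1 \<le> kN" "kN \<le> KN" "real kN * \<mu> \<le> 1" "1 \<le> (real kN + 1) * \<mu>"
    using kN_pos[OF m1] kN_le_KN kN_bounds by auto
  have "decay_env (min 1 \<mu>) (cutoff wave) x
      = ereal (wave (breakpoint kink speed kN) - \<mu> * (x - breakpoint kink speed kN))"
    using W.decay_env_mu_cutoff[OF k W.W_breakpoint_nonneg[OF k(1-3)] x] m1 by simp
  moreover have "breakpoint kink speed kN + (1 - 2 * \<gamma> + wave (breakpoint kink speed kN)) / \<mu> = front"
    using front_at_kink[OF m1] mu0 by (simp add: field_simps)
  ultimately show ?thesis using pfun_ge_gamma_iff affine_threshold_iff[OF mu0] by simp
qed

lemma sfun_wave: "sfun \<gamma> \<mu> (cutoff wave) = ereal front"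
  unfolding sfun_def
proof (cases "\<mu> > 1")
  case True
  show "Sup (ereal ` {x. ereal \<gamma> \<le> pfun \<gamma> \<mu> (cutoff wave) x}) = ereal front"
    by (rule Sup_eq_threshold[of "front - speed"]) (use speed_pos wave_threshold_if_mu_gt_1[OF True] in auto)
next
  case False
  then have m1: "\<mu> < 1" using mu1 by simp
  have "0 < real kN * speed" using kN_pos[OF m1] speed_pos by simp
  then have "breakpoint kink speed kN < front"
    unfolding breakpoint_def kink_def by (cases "front \<le> speed") simp_all
  then show "Sup (ereal ` {x. ereal \<gamma> \<le> pfun \<gamma> \<mu> (cutoff wave) x}) = ereal front"
    by (rule Sup_eq_threshold) (use wave_threshold_if_mu_lt_1[OF m1] in auto)
qed

lemma step_wave: "step \<gamma> \<mu> (cutoff wave) = shift speed (cutoff wave)"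
proof (rule ext)
  fix x
  have "step \<gamma> \<mu> (cutoff wave) x = piop (Phi \<gamma> \<mu> (ereal front) (cutoff wave) x)"
    by (simp add: step_def sfun_wave)
  also have "\<dots> = piop (ereal (W.gain x) + lip_env (cutoff wave) x)"
    by (simp add: Phi_real W.gain_def)
  also have "\<dots> = cutoff wave (x - speed)" using W.cutoff_recursion[of x] by simp
  finally show "step \<gamma> \<mu> (cutoff wave) x = shift speed (cutoff wave) x" by (simp add: shift_def)
qed

lemma traveling_wave_wave: "traveling_wave \<gamma> \<mu> (cutoff wave) speed"
  by (rule traveling_waveI[OF step_wave])

lemma wave_support_bounded: "\<exists>B. \<forall>y. wave y \<ge> 0 \<longrightarrow> - B \<le> y \<and> y \<le> 0"
proof -
  define c where "c = piece \<mu> KN kink speed (KN + 2) 0"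
  have sN: "slope \<mu> KN (KN + 2) = 1 + \<mu>" by (simp add: slope_def)
  show ?thesis
  proof (intro exI allI impI)
    fix y assume y: "wave y \<ge> 0"
    have "wave y \<le> piece \<mu> KN kink speed (KN + 2) y" by (rule W.W_le_piece) simp
    also have "\<dots> = c + (1 + \<mu>) * y" using W.piece_affine[of "KN + 2" y 0] sN by (simp add: c_def)
    finally have a: "0 \<le> c + (1 + \<mu>) * y" using y by simp
    have "- c \<le> (1 + \<mu>) * y" using a by linarith
    then have "(- c) / (1 + \<mu>) \<le> ((1 + \<mu>) * y) / (1 + \<mu>)" using mu0 by (intro divide_right_mono) auto
    then have "- c / (1 + \<mu>) \<le> y" using mu0 by simp
    moreover have "- (\<bar>c\<bar> / (1 + \<mu>)) \<le> - c / (1 + \<mu>)" using mu0 by (simp add: divide_right_mono)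
    ultimately have "- (\<bar>c\<bar> / (1 + \<mu>)) \<le> y" by linarith
    moreover have "y \<le> 0" using y W.W_neg[of y] by force
    ultimately show "- (\<bar>c\<bar> / (1 + \<mu>)) \<le> y \<and> y \<le> 0" by simp
  qed
qed

lemma admissible_wave_wave: "admissible_wave (cutoff wave)"
proof -
  have supp: "support (cutoff wave) = {y. 0 \<le> wave y}"
    by (auto simp: support_def cutoff_def piop_ereal)
  have cl: "closed {y. 0 \<le> wave y}"
    by (rule closed_Collect_le) (auto intro: W.W_continuous_on continuous_on_const)
  obtain B where B: "\<And>y. wave y \<ge> 0 \<Longrightarrow> - B \<le> y \<and> y \<le> 0" using wave_support_bounded by blast
  have bd: "bounded {y. 0 \<le> wave y}"
    by (rule bounded_subset[OF bounded_closed_interval[of "-B" 0]]) (use B in auto)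
  have cc: "concave_ext (cutoff wave)"
    unfolding concave_ext_def
  proof (intro allI impI)
    fix x y t :: real assume t: "0 < t \<and> t < 1"
    show "ereal t * cutoff wave x + ereal (1 - t) * cutoff wave y \<le> cutoff wave (t * x + (1 - t) * y)"
    proof (cases "wave x \<ge> 0 \<and> wave y \<ge> 0")
      case True
      have "t * wave x + (1 - t) * wave y \<le> wave (t * x + (1 - t) * y)"
        using W.W_concave[of t x y] t by simp
      moreover have "t * wave x + (1 - t) * wave y \<ge> 0" using True t by simp
      ultimately show ?thesis using True by (simp add: cutoff_def piop_ereal)
    next
      case False
      have ninf: "ereal a * cutoff wave z \<noteq> \<infinity>" if "0 < a" for a z
        using that by (cases "wave z \<ge> 0") (auto simp: cutoff_def piop_ereal)
      have "ereal t * cutoff wave x + ereal (1 - t) * cutoff wave y = -\<infinity>"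
      proof (cases "wave x \<ge> 0")
        case True
        then have "wave y < 0" using False by simp
        then have "ereal (1 - t) * cutoff wave y = -\<infinity>" using t by (simp add: cutoff_def piop_ereal)
        then show ?thesis using ninf[of t x] t by (cases "ereal t * cutoff wave x") auto
      next
        case F2: False
        then have "ereal t * cutoff wave x = -\<infinity>" using t by (simp add: cutoff_def piop_ereal)
        then show ?thesis using ninf[of "1 - t" y] t by (cases "ereal (1 - t) * cutoff wave y") auto
      qed
      then show ?thesis by (rule ord_eq_le_trans) simp
    qed
  qed
  have "0 \<le> wave 0" using W.W_0 by simp
  then show ?thesis unfolding admissible_wave_def supp
    using cl bd cc by (auto simp: compact_eq_bounded_closed cutoff_def piop_ereal)
qed

lemma wave_pos_point: "\<exists>y1<0. wave y1 > 0"
proof -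
  show ?thesis
  proof (cases "\<gamma> \<le> gamma_c \<mu>")
    case True
    have m1: "\<mu> < 1" using case_i_mu_less_1[OF True] .
    have m: "kink = speed" using case_i_facts[OF True] by simp
    have KN1: "1 \<le> KN" using kN_pos[OF m1] kN_le_KN by simp
    have "wave (breakpoint kink speed 2) = speed * (1 - \<mu>)"
      using W.W_breakpoint[of 2] KN1 m by simp
    moreover have "breakpoint kink speed 2 < 0" using m speed_pos by (simp add: breakpoint_def)
    ultimately show ?thesis using m1 speed_pos by (intro exI[of _ "breakpoint kink speed 2"]) auto
  next
    case False
    have m: "kink = front" "front < speed" using case_ii_front_gap[OF False] by (auto simp: kink_def)
    have "wave (breakpoint kink speed 1) = speed - front" using W.W_eq_first_piece[of "breakpoint kink speed 1"] m by (simp add: breakpoint_def)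
    moreover have "breakpoint kink speed 1 < 0" using m by (simp add: breakpoint_def)
    ultimately show ?thesis using m by (intro exI[of _ "breakpoint kink speed 1"]) auto
  qed
qed

lemma wave_pos_near_0: "\<exists>y1<0. \<forall>y. y1 \<le> y \<and> y < 0 \<longrightarrow> wave y > 0"
proof -
  obtain y1 where y1: "y1 < 0" "wave y1 > 0" using wave_pos_point by blast
  show ?thesis
  proof (intro exI conjI allI impI)
    show "y1 < 0" by fact
    fix y assume y: "y1 \<le> y \<and> y < 0"
    define t where "t = y / y1"
    have t: "0 < t" "t \<le> 1" using y y1 by (auto simp: t_def field_simps)
    have "t * y1 + (1 - t) * 0 = y" using y1 by (simp add: t_def)
    then have "t * wave y1 + (1 - t) * wave 0 \<le> wave y" using W.W_concave[of t y1 0] t by simp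
    moreover have "wave 0 = 0" using W.W_0 by simp
    moreover have "t * wave y1 > 0" using t y1 by simp
    ultimately show "wave y > 0" by simp
  qed
qed

lemma wave_normalized: "Sup (ereal ` {x. cutoff wave x > 0}) = 0"
proof -
  obtain y1 where y1: "y1 < 0" "\<And>y. y1 \<le> y \<and> y < 0 \<Longrightarrow> wave y > 0" using wave_pos_near_0 by blast
  have pos_iff: "cutoff wave x > 0 \<longleftrightarrow> wave x > 0" for x by (simp add: cutoff_def piop_ereal)
  show ?thesis
  proof (rule antisym)
    show "Sup (ereal ` {x. cutoff wave x > 0}) \<le> 0"
    proof (rule SUP_least)
      fix x assume "x \<in> {x. cutoff wave x > 0}"
      then have "wave x > 0" using pos_iff by simp
      then have "x \<le> 0" using W.W_neg[of x] by force
      then show "ereal x \<le> 0" by (simp add: zero_ereal_def)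
    qed
    show "0 \<le> Sup (ereal ` {x. cutoff wave x > 0})"
    proof (rule ereal_le_epsilon2)
      fix e :: real assume e: "0 < e"
      define x where "x = max y1 (- e / 2)"
      have x: "y1 \<le> x" "x < 0" using y1 e by (auto simp: x_def)
      then have "x \<in> {x. cutoff wave x > 0}" using y1(2)[of x] pos_iff by simp
      then have "ereal x \<le> Sup (ereal ` {x. cutoff wave x > 0})" by (rule SUP_upper)
      moreover have "0 \<le> x + e" using e by (simp add: x_def)
      ultimately have a: "ereal x + ereal e \<le> Sup (ereal ` {x. cutoff wave x > 0}) + ereal e"
        by (intro add_right_mono) auto
      have b: "0 \<le> ereal x + ereal e" using \<open>0 \<le> x + e\<close> by (simp add: zero_ereal_def)
      show "0 \<le> Sup (ereal ` {x. cutoff wave x > 0}) + ereal e" using order_trans[OF b a] .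
    qed
  qed
qed

lemma wave_exists:
  "\<exists>g v. admissible_wave g \<and> traveling_wave \<gamma> \<mu> g v \<and> Sup (ereal ` {x. g x > 0}) = 0"
  by (intro exI[of _ "cutoff wave"] exI[of _ speed] conjI admissible_wave_wave traveling_wave_wave
      wave_normalized)

end

section \<open>Uniqueness\<close>

locale anchored_wave = wave_params +
  fixes g :: "real \<Rightarrow> ereal" and v :: real
  assumes admissible: "admissible_wave g" and step_eq_shift: "step \<gamma> \<mu> g = shift v g"
    and minf_right: "\<And>y. y > 0 \<Longrightarrow> g y = -\<infinity>" and finite_at_0: "g 0 \<noteq> -\<infinity>"
    and has_pos: "\<exists>y. g y > 0"
begin

definition threshold :: ereal where "threshold = sfun \<gamma> \<mu> g"

lemma not_inf: "g y \<noteq> \<infinity>"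
  using admissible by (simp add: admissible_wave_def)

lemma step_at: "g (x - v) = piop (Phi \<gamma> \<mu> threshold g x)"
  using fun_cong[OF step_eq_shift, of x] by (simp add: step_def shift_def threshold_def)

lemma nonneg: "g y \<noteq> -\<infinity> \<Longrightarrow> 0 \<le> g y"
  using step_at[of "y + v"] piop_not_minf by force

lemma lip_env_finite: "lip_env g z \<noteq> \<infinity>" "lip_env g z \<noteq> -\<infinity>"
proof
  assume inf: "lip_env g z = \<infinity>"
  have "lip_env g z \<le> lip_env g v + ereal \<bar>z - v\<bar>" by (rule lip_env_lipschitz[of g, OF not_inf])
  then have "lip_env g v = \<infinity>" using inf by (cases "lip_env g v") auto
  then have "g (v - v) = \<infinity>" using step_at[of v] by (simp add: Phi_lip_env piop_def)
  then show False using not_inf by simp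
next
  have "g 0 - ereal \<bar>z - 0\<bar> \<noteq> -\<infinity>" using finite_at_0 not_inf[of 0] by (cases "g 0") auto
  then show "lip_env g z \<noteq> -\<infinity>" using lip_env_ge[of g 0 z] by auto
qed

definition lip_val :: "real \<Rightarrow> real" where "lip_val z = real_of_ereal (lip_env g z)"

lemma lip_env_eq: "lip_env g z = ereal (lip_val z)"
  using lip_env_finite by (simp add: lip_val_def ereal_real_cases)

lemma lip_val_lipschitz: "\<bar>lip_val z - lip_val z'\<bar> \<le> \<bar>z - z'\<bar>"
  using lip_env_lipschitz[of g z z', OF not_inf] lip_env_lipschitz[of g z' z, OF not_inf]
  by (simp add: lip_env_eq abs_le_iff abs_minus_commute)

lemma threshold_not_inf: "threshold \<noteq> \<infinity>"
proof
  assume "threshold = \<infinity>"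
  then have "g (v - v) = -\<infinity>" using step_at[of v] mu0 by (simp add: Phi_lip_env lip_env_eq piop_def)
  then show False using finite_at_0 by simp
qed

definition drive :: "real \<Rightarrow> real" where
  "drive x = (if threshold = -\<infinity> then 1 - \<gamma> else 1 - \<gamma> - \<mu> * max (real_of_ereal threshold - x) 0)"

definition raw :: "real \<Rightarrow> real" where "raw x = drive x + lip_val x"

lemma step_raw: "g (x - v) = piop (ereal (raw x))"
proof -
  have "Phi \<gamma> \<mu> threshold g x = ereal (raw x)"
  proof (cases "threshold = -\<infinity>")
    case True then show ?thesis by (simp add: Phi_lip_env lip_env_eq raw_def drive_def)
  next
    case False
    then have "threshold = ereal (real_of_ereal threshold)"
      using threshold_not_inf by (simp add: ereal_real_cases)
    then show ?thesis using False by (metis Phi_real lip_env_eq plus_ereal.simps(1) raw_def drive_def)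
  qed
  then show ?thesis using step_at by simp
qed

lemma g_raw: "g y = piop (ereal (raw (y + v)))"
  using step_raw[of "y + v"] by simp

lemma g_real: "g y \<noteq> -\<infinity> \<Longrightarrow> g y = ereal (raw (y + v)) \<and> 0 \<le> raw (y + v)"
  using g_raw[of y] by (auto simp: piop_ereal split: if_splits)

lemma drive_mono: "x \<le> x' \<Longrightarrow> drive x \<le> drive x'"
  using mu0 by (auto simp: drive_def intro!: mult_left_mono)

lemma drive_lipschitz: "\<bar>drive x - drive x'\<bar> \<le> \<mu> * \<bar>x - x'\<bar>"
proof (cases "threshold = -\<infinity>")
  case True then show ?thesis using mu0 by (simp add: drive_def)
next
  case False
  define s where "s = real_of_ereal threshold"
  have "\<bar>max (s - x') 0 - max (s - x) 0\<bar> \<le> \<bar>x - x'\<bar>" by (simp add: max_def abs_if)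
  moreover have "\<bar>drive x - drive x'\<bar> = \<mu> * \<bar>max (s - x') 0 - max (s - x) 0\<bar>"
    using False mu0 by (simp add: drive_def s_def abs_mult flip: right_diff_distrib)
  ultimately show ?thesis using mu0 by (simp add: mult_left_mono)
qed

lemma raw_lipschitz: "\<bar>raw x - raw x'\<bar> \<le> (1 + \<mu>) * \<bar>x - x'\<bar>"
  using drive_lipschitz[of x x'] lip_val_lipschitz[of x x'] by (simp add: raw_def algebra_simps)

lemma raw_at_speed: "raw v = 0"
proof -
  have nonneg: "raw v \<ge> 0" using g_raw[of 0] finite_at_0 by (auto simp: piop_ereal split: if_splits)
  show ?thesis
  proof (rule ccontr)
    assume "raw v \<noteq> 0"
    then have pos: "raw v > 0" using nonneg by simp
    define \<delta> where "\<delta> = raw v / (2 * (1 + \<mu>))"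
    have "\<delta> > 0" using pos mu0 by (simp add: \<delta>_def)
    have "\<bar>raw (v + \<delta>) - raw v\<bar> \<le> (1 + \<mu>) * \<delta>" using raw_lipschitz[of "v + \<delta>" v] \<open>\<delta> > 0\<close> by simp
    moreover have "(1 + \<mu>) * \<delta> = raw v / 2" using mu0 by (simp add: \<delta>_def field_simps)
    ultimately have "raw (v + \<delta>) > 0" using pos by linarith
    then have "g \<delta> \<noteq> -\<infinity>" using g_raw[of \<delta>] by (simp add: piop_ereal add.commute)
    then show False using minf_right \<open>\<delta> > 0\<close> by simp
  qed
qed

lemma g_0: "g 0 = 0"
  using g_raw[of 0] raw_at_speed by (simp add: piop_ereal zero_ereal_def)

definition left_end :: real where "left_end = Inf {y. g y \<noteq> -\<infinity>}"

lemma finite_iff: "g y \<noteq> -\<infinity> \<longleftrightarrow> left_end \<le> y \<and> y \<le> 0"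
proof -
  have "support g = {y. g y \<noteq> -\<infinity>}" using nonneg by (auto simp: support_def)
  then have cpt: "compact {y. g y \<noteq> -\<infinity>}" using admissible by (simp add: admissible_wave_def)
  have ne: "{y. g y \<noteq> -\<infinity>} \<noteq> {}" using finite_at_0 by auto
  have bdd: "bdd_below {y. g y \<noteq> -\<infinity>}" using cpt by (intro bounded_imp_bdd_below compact_imp_bounded)
  have L: "g left_end \<noteq> -\<infinity>"
    using closed_contains_Inf[OF ne bdd compact_imp_closed[OF cpt]] by (simp add: left_end_def)
  have cc: "concave_ext g" using admissible by (simp add: admissible_wave_def)
  have fin: "\<And>y. g y \<noteq> \<infinity>" by (rule not_inf)
  show ?thesis
  proof
    assume "g y \<noteq> -\<infinity>"
    then show "left_end \<le> y \<and> y \<le> 0"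
      using minf_right bdd by (auto simp: left_end_def intro: cInf_lower) (meson not_le)
  next
    assume "left_end \<le> y \<and> y \<le> 0"
    then show "g y \<noteq> -\<infinity>" using concave_ext_finite_between[OF cc fin L finite_at_0] by blast
  qed
qed

lemma left_end_neg: "left_end < 0"
proof -
  obtain y where y: "g y > 0" using has_pos by blast
  then have "y \<noteq> 0" using g_0 by auto
  then show ?thesis using finite_iff[of y] y by auto
qed

lemma plus_id_mono:
  assumes "y1 \<le> y2" "y2 \<le> 0" "g y1 \<noteq> -\<infinity>"
  shows "g y1 + ereal y1 \<le> g y2 + ereal y2"
proof -
  have g2: "g y2 \<noteq> -\<infinity>" using finite_iff assms by auto
  have "drive (y1 + v) \<le> drive (y2 + v)" using assms by (intro drive_mono) simp
  moreover have "lip_val (y1 + v) \<le> lip_val (y2 + v) + (y2 - y1)"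
    using lip_val_lipschitz[of "y1 + v" "y2 + v"] assms by simp
  ultimately have "raw (y1 + v) + y1 \<le> raw (y2 + v) + y2" by (simp add: raw_def)
  then show ?thesis using g_real[OF assms(3)] g_real[OF g2] by simp
qed

sublocale anchored g
  using not_inf minf_right g_0 plus_id_mono by unfold_locales auto

lemma lip_env_le_max:
  assumes z: "z \<le> 0" and M: "\<And>y. left_end \<le> y \<Longrightarrow> y \<le> 0 \<Longrightarrow> raw (y + v) - y \<le> M"
  shows "lip_env g z \<le> ereal (M + z)"
proof -
  have "(SUP y\<in>{z..0}. g y - ereal y) \<le> ereal M"
  proof (rule SUP_least)
    fix y assume "y \<in> {z..0}"
    show "g y - ereal y \<le> ereal M"
    proof (cases "g y = -\<infinity>")
      case False
      then have "raw (y + v) - y \<le> M" using finite_iff M by blast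
      then show ?thesis using g_real[OF False] by simp
    qed simp
  qed
  then have "(SUP y\<in>{z..0}. g y - ereal y) + ereal z \<le> ereal M + ereal z" by (rule add_right_mono)
  then show ?thesis using lip_env_nonpos[OF z] by simp
qed

lemma threshold_if_speed_nonpos:
  assumes "v \<le> 0"
  shows "threshold \<noteq> -\<infinity>" and "1 - \<gamma> - \<mu> * real_of_ereal threshold \<le> 0"
proof -
  have "lip_val 0 = 0" using lip_env_pos[of 0] by (simp add: lip_env_eq zero_ereal_def)
  moreover have "raw 0 \<le> 0"
  proof (cases "v = 0")
    case True then show ?thesis using raw_at_speed by simp
  next
    case False
    then have "g (0 - v) = -\<infinity>" using minf_right assms by simp
    then show ?thesis using step_raw[of 0] by (auto simp: piop_ereal split: if_splits)
  qed
  ultimately have "drive 0 \<le> 0" by (simp add: raw_def)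
  then show "threshold \<noteq> -\<infinity>" and "1 - \<gamma> - \<mu> * real_of_ereal threshold \<le> 0"
    using ga1 mu0 by (auto simp: drive_def max_def split: if_splits)
qed

text \<open>For \<open>v \<le> 0\<close>, a maximiser of \<open>g y - y\<close> over the support would have to lie at \<open>0\<close>,
  while \<open>g (left_end) - left_end > 0 = g 0 - 0\<close>.\<close>

lemma v_pos: "v > 0"
proof (rule ccontr)
  assume "\<not> v > 0"
  then have v0: "v \<le> 0" by simp
  define s where "s = real_of_ereal threshold"
  define e where "e y = raw (y + v) - y" for y
  have "\<bar>e y - e y'\<bar> \<le> (2 + \<mu>) * \<bar>y - y'\<bar>" for y y'
    using raw_lipschitz[of "y + v" "y' + v"] by (simp add: e_def abs_if algebra_simps split: if_splits)
  then have "(2 + \<mu>)-lipschitz_on {left_end..0} e"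
    by (intro lipschitz_onI) (use mu0 in \<open>auto simp: dist_real_def\<close>)
  then have cont: "continuous_on {left_end..0} e" by (rule lipschitz_on_continuous_on)
  obtain ys where ys: "ys \<in> {left_end..0}" "\<forall>y\<in>{left_end..0}. e y \<le> e ys"
    using continuous_attains_sup[OF compact_Icc _ cont] left_end_neg by auto
  have "lip_env g (ys + v) \<le> ereal (e ys + (ys + v))"
  proof (rule lip_env_le_max)
    show "ys + v \<le> 0" using ys v0 by simp
    show "raw (y + v) - y \<le> e ys" if "left_end \<le> y" "y \<le> 0" for y
      using ys(2) that unfolding e_def by simp
  qed
  then have "lip_val (ys + v) \<le> e ys + (ys + v)" by (simp add: lip_env_eq)
  moreover have "0 < s"
  proof -
    have "0 < \<mu> * s" using threshold_if_speed_nonpos(2)[OF v0] ga1 by (simp add: s_def)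
    then show ?thesis using mu0 by (simp add: zero_less_mult_iff)
  qed
  then have "drive (ys + v) = 1 - \<gamma> - \<mu> * (s - (ys + v))"
    using threshold_if_speed_nonpos(1)[OF v0] ys v0 by (simp add: drive_def s_def max_def)
  ultimately have "0 \<le> (1 - \<gamma> - \<mu> * s) + \<mu> * ys + (1 + \<mu>) * v"
    by (simp add: e_def raw_def algebra_simps)
  moreover have "(1 + \<mu>) * v \<le> 0" using v0 mu0 by (simp add: mult_nonneg_nonpos)
  ultimately have "0 \<le> \<mu> * ys" using threshold_if_speed_nonpos(2)[OF v0] by (simp add: s_def)
  then have "ys = 0" using ys mu0 by (simp add: zero_le_mult_iff)
  then have "e left_end \<le> e 0" using ys left_end_neg by auto
  moreover have "e 0 = 0" using raw_at_speed by (simp add: e_def)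
  moreover have "g left_end \<noteq> -\<infinity>" using finite_iff left_end_neg by simp
  then have "e left_end > 0" using g_real[of left_end] left_end_neg by (simp add: e_def)
  ultimately show False by simp
qed

text \<open>A threshold of \<open>-\<infinity>\<close> acts like any front left of \<open>left_end - v\<close>.\<close>

definition front_param :: real where
  "front_param = (if threshold = -\<infinity> then left_end - v - 1 else real_of_ereal threshold)"

lemma recursion:
  "g (x - v) = piop (ereal (1 - \<gamma> - \<mu> * max (front_param - x) 0) + lip_env g x)"
proof (cases "threshold \<noteq> -\<infinity> \<or> front_param \<le> x")
  case True
  then have "1 - \<gamma> - \<mu> * max (front_param - x) 0 = drive x"
    by (auto simp: front_param_def drive_def max_def)
  then show ?thesis using step_raw[of x] by (simp add: lip_env_eq raw_def)
next
  case False
  then have "x - v < left_end" using v_pos by (simp add: front_param_def)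
  then have gx: "g (x - v) = -\<infinity>" using finite_iff[of "x - v"] by simp
  then have "raw x < 0" using step_raw[of x] by (auto simp: piop_ereal split: if_splits)
  moreover have "1 - \<gamma> - \<mu> * max (front_param - x) 0 \<le> 1 - \<gamma>" using mu0 by simp
  ultimately have "1 - \<gamma> - \<mu> * max (front_param - x) 0 + lip_val x < 0"
    using False by (simp add: raw_def drive_def)
  then show ?thesis using gx by (simp add: lip_env_eq piop_ereal)
qed

lemma sfun_cases: "sfun \<gamma> \<mu> g = ereal front_param \<or> (\<forall>y. g y \<noteq> -\<infinity> \<longrightarrow> front_param - v < y)"
  using threshold_not_inf finite_iff v_pos
  by (cases "threshold = -\<infinity>") (auto simp: front_param_def threshold_def ereal_real_cases)

lemma speed_relation: "1 - \<gamma> - \<mu> * max (front_param - v) 0 = v"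
proof -
  have "piop (ereal (1 - \<gamma> - \<mu> * max (front_param - v) 0 - v)) = 0"
    using recursion[of v] lip_env_pos[of v] g_0 v_pos by simp
  then show ?thesis using piop_zero by fastforce
qed

lemma front_le_speed_if_mu_gt_1: "front_param \<le> v \<or> \<mu> < 1"
proof (rule ccontr)
  assume "\<not> (front_param \<le> v \<or> \<mu> < 1)"
  then have Sv: "front_param > v" and m1: "\<mu> > 1" using mu1 by auto
  define x where "x = (v + front_param) / 2"
  have x: "v < x" "x < front_param" using Sv by (auto simp: x_def)
  then have "piop (ereal (1 - \<gamma> - \<mu> * max (front_param - x) 0 - x)) = -\<infinity>"
    using recursion[of x] minf_right[of "x - v"] lip_env_pos[of x] v_pos by simp
  then have "1 - \<gamma> - \<mu> * (front_param - x) - x < 0" using x by (auto simp: piop_ereal split: if_splits)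
  moreover have "1 - \<gamma> - \<mu> * (front_param - v) - v = 0" using speed_relation Sv by (simp add: max_def)
  then have "1 - \<gamma> - \<mu> * (front_param - x) - x = (\<mu> - 1) * (x - v)" by (simp add: algebra_simps)
  moreover have "(\<mu> - 1) * (x - v) > 0" using m1 x by simp
  ultimately show False by simp
qed

sublocale R: wave_recursion \<mu> KN "min front_param v" v \<gamma> front_param
  using mu0 v_pos KN_bounds ga0 ga1 speed_relation front_le_speed_if_mu_gt_1
  by unfold_locales auto

lemma eq_profile: "g = cutoff (profile \<mu> KN (min front_param v) v)"
proof (rule recursion_unique[OF anchored_axioms R.anchored_cutoff v_pos])
  show "g (x - v) = piop (ereal (R.gain x) + lip_env g x)" for x
    using recursion[of x] by (simp add: R.gain_def)
qed (rule R.cutoff_recursion)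

lemma threshold_set_Sup: "Sup (ereal ` {x. ereal \<gamma> \<le> pfun \<gamma> \<mu> g x}) = ereal front_param"
proof -
  define y1 where "y1 = min 0 (front_param - v)"
  have "0 \<le> profile \<mu> KN (min front_param v) v y1"
    using R.W_eq_first_piece[of y1] R.W_0 by (cases "front_param \<le> v") (auto simp: y1_def breakpoint_def)
  then have "g y1 \<noteq> -\<infinity>" using fun_cong[OF eq_profile, of y1] by (simp add: cutoff_def piop_ereal)
  then have "sfun \<gamma> \<mu> g = ereal front_param" using sfun_cases by (force simp: y1_def)
  then show ?thesis by (simp add: sfun_def)
qed

lemma params_if_mu_gt_1:
  assumes m1: "\<mu> > 1"
  shows "v = speed \<and> front_param = front"
proof -
  have Sv: "front_param \<le> v" using front_le_speed_if_mu_gt_1 m1 by simp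
  have v1: "v = 1 - \<gamma>" using speed_relation Sv by (simp add: max_def)
  have T: "x \<in> {x. ereal \<gamma> \<le> pfun \<gamma> \<mu> g x} \<longleftrightarrow> x \<le> 1 - 2 * \<gamma>" if x: "x \<ge> front_param - v" for x
  proof -
    define W where "W = profile \<mu> KN (min front_param v) v"
    have "g = cutoff W" unfolding W_def by (rule eq_profile)
    moreover have "x \<ge> breakpoint (min front_param v) v 1" using x Sv by (simp add: breakpoint_def)
    ultimately have "decay_env (min 1 \<mu>) g x = ereal (- x)"
      using R.decay_env_one_cutoff[folded W_def] m1 by simp
    then show ?thesis using pfun_ge_gamma_iff by auto
  qed
  have "front_param = 1 - 2 * \<gamma>"
    by (rule Sup_threshold_eq[where ?y0.0 = "front_param - v", OF threshold_set_Sup _ T])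
      (use v_pos in simp_all)
  moreover have "\<not> \<gamma> \<le> gamma_c \<mu>" using gamma_c_eq_0[OF m1] ga0 by simp
  moreover have "kk \<mu> = 0" using kN_zero[OF m1] kN_real by simp
  ultimately show ?thesis using v1 by (simp add: front_def speed_def)
qed

text \<open>For \<open>\<mu> < 1\<close> the threshold condition is read off at the kink \<open>b\<^sub>k\<close>, \<open>k = \<lfloor>1/\<mu>\<rfloor>\<close>,
  where the slope of the profile crosses \<open>-\<mu>\<close>.\<close>

lemma threshold_at_kink:
  assumes m1: "\<mu> < 1"
  defines "b \<equiv> breakpoint (min front_param v) v kN"
  shows "\<mu> * (front_param - b) = 1 - 2 * \<gamma> + (v - min front_param v)
    + v * ((real kN - 1) - \<mu> * real kN * (real kN - 1) / 2)"
proof -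
  define W where "W = profile \<mu> KN (min front_param v) v"
  have gW: "g = cutoff W" unfolding W_def by (rule eq_profile)
  have k: "1 \<le> kN" "kN \<le> KN" "real kN * \<mu> \<le> 1" "1 \<le> (real kN + 1) * \<mu>"
    using kN_pos[OF m1] kN_le_KN kN_bounds by auto
  have Wb: "W b = (v - min front_param v) + v * ((real kN - 1) - \<mu> * real kN * (real kN - 1) / 2)"
    using R.W_breakpoint[of kN] k by (simp add: b_def W_def)
  have w0: "W b \<ge> 0" using R.W_breakpoint_nonneg[of kN] k by (simp add: b_def W_def)
  have T: "x \<in> {x. ereal \<gamma> \<le> pfun \<gamma> \<mu> g x} \<longleftrightarrow> x \<le> b + (1 - 2 * \<gamma> + W b) / \<mu>"
    if "x \<ge> b" for x
  proof -
    have "decay_env (min 1 \<mu>) g x = ereal (W b - \<mu> * (x - b))"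
      using R.decay_env_mu_cutoff[OF k, folded W_def] w0 that gW m1 by (simp add: b_def)
    then show ?thesis using pfun_ge_gamma_iff affine_threshold_iff[OF mu0] by simp
  qed
  have "real kN * v > 0" using k v_pos by simp
  then have "b < front_param" unfolding b_def breakpoint_def by (cases "front_param \<le> v") simp_all
  then have "front_param = b + (1 - 2 * \<gamma> + W b) / \<mu>"
    by (rule Sup_threshold_eq[OF threshold_set_Sup _ T])
  then show ?thesis using Wb mu0 by (simp add: field_simps)
qed

lemma params_if_front_ge_speed:
  assumes m1: "\<mu> < 1" and Sv: "front_param \<ge> v"
  shows "v = speed \<and> front_param = front"
proof -
  have rel: "1 - \<gamma> - \<mu> * (front_param - v) = v" using speed_relation Sv by (simp add: max_absorb1)
  have "\<mu> * (front_param - (v - real kN * v))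
      = 1 - 2 * \<gamma> + v * ((real kN - 1) - \<mu> * real kN * (real kN - 1) / 2)"
    using threshold_at_kink[OF m1] Sv by (simp add: breakpoint_def min_absorb2)
  then have "v * speed_denom = 2 * \<gamma>" using speed_identity_i[OF rel] by (simp add: speed_denom_def)
  then have vD: "v = 2 * \<gamma> / speed_denom" using speed_denom_pos[OF m1] by (simp add: field_simps)
  have "v \<le> 1 - \<gamma>" using rel Sv mu0 by (smt (verit) mult_nonneg_nonneg)
  then have gc: "\<gamma> \<le> gamma_c \<mu>" using le_gamma_c_iff[OF m1] vD by simp
  then have "speed = v" using speed_i vD by simp
  moreover have "front = v + (1 - \<gamma> - v) / \<mu>" using gc \<open>speed = v\<close> by (simp add: front_def)
  moreover have "1 - \<gamma> - v = \<mu> * (front_param - v)" using rel by simp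
  ultimately show ?thesis using mu0 by simp
qed

lemma params_if_front_lt_speed:
  assumes m1: "\<mu> < 1" and Sv: "front_param < v"
  shows "v = speed \<and> front_param = front"
proof -
  have v1: "v = 1 - \<gamma>" using speed_relation Sv by (simp add: max_def)
  have "\<mu> * (front_param - (front_param - real kN * v))
      = 1 - 2 * \<gamma> + ((v - front_param) + v * ((real kN - 1) - \<mu> * real kN * (real kN - 1) / 2))"
    using threshold_at_kink[OF m1] Sv by (simp add: breakpoint_def min_def)
  then have gap: "v - front_param = 1 - (1 - \<gamma>) * (kk \<mu> * (1 - (kk \<mu> + 1) / 2 * \<mu>) + 1)"
    using speed_identity_ii[OF v1] by (simp add: kN_real)
  then have "1 - (1 - \<gamma>) * (2 + speed_denom) / 2 > 0" using Sv front_gap_eq by linarith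
  then have "\<gamma> > gamma_c \<mu>" using gamma_c_less_iff by simp
  then show ?thesis using v1 gap by (simp add: speed_def front_def)
qed

lemma eq_wave: "g = cutoff wave \<and> v = speed"
proof -
  have params: "v = speed \<and> front_param = front"
  proof (cases "\<mu> < 1")
    case m1: True
    show ?thesis
    proof (cases "front_param < v")
      case True
      then show ?thesis by (rule params_if_front_lt_speed[OF m1])
    next
      case False
      then show ?thesis by (intro params_if_front_ge_speed[OF m1]) simp
    qed
  next
    case False
    then show ?thesis by (intro params_if_mu_gt_1) (use mu1 in simp)
  qed
  note v = conjunct1[OF params] and front = conjunct2[OF params]
  have "min front_param v = min front v" by (simp only: front)
  also have "\<dots> = kink" by (simp add: kink_def v)
  finally show ?thesis using eq_profile v by simp
qed

end

context wave_params
begin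

lemma wave_nonneg:
  assumes tw: "traveling_wave \<gamma> \<mu> g v" and ne: "g y \<noteq> -\<infinity>"
  shows "0 \<le> g y"
proof -
  have "g y = step \<gamma> \<mu> g (y + v)" using fun_cong[OF traveling_wave_step[OF tw], of "y + v"] by (simp add: shift_def)
  then have eq: "g y = piop (Phi \<gamma> \<mu> (sfun \<gamma> \<mu> g) g (y + v))" by (simp add: step_def)
  then have p: "piop (Phi \<gamma> \<mu> (sfun \<gamma> \<mu> g) g (y + v)) \<noteq> -\<infinity>" using ne by simp
  have "0 \<le> piop (Phi \<gamma> \<mu> (sfun \<gamma> \<mu> g) g (y + v))" using piop_not_minf[OF p] by simp
  then show ?thesis using eq by simp
qed

lemma step_at_wave:
  assumes "traveling_wave \<gamma> \<mu> g v"
  shows "g (x - v) = piop (Phi \<gamma> \<mu> (sfun \<gamma> \<mu> g) g x)"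
  using fun_cong[OF traveling_wave_step[OF assms], of x] by (simp add: step_def shift_def)

lemma sfun_finite_if_nonpos:
  assumes adm: "admissible_wave g" and tw: "traveling_wave \<gamma> \<mu> g v" and le0: "\<And>y. g y \<le> 0"
  shows "\<exists>s. sfun \<gamma> \<mu> g = ereal s"
proof -
  define S where "S = sfun \<gamma> \<mu> g"
  obtain y0 where "g y0 \<ge> 0" using adm by (auto simp: admissible_wave_def support_def)
  then have gy0: "g y0 = 0" by (intro antisym le0)
  have lip_ge: "ereal (- \<bar>x - y0\<bar>) \<le> lip_env g x" for x
    using lip_env_ge[of g y0 x] gy0 by simp
  have lip_le: "lip_env g x \<le> 0" for x
    unfolding lip_env_def
  proof (rule SUP_least)
    fix y show "g y - ereal \<bar>x - y\<bar> \<le> 0" using le0[of y] by (cases "g y") auto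
  qed
  have "S \<noteq> -\<infinity>"
  proof
    assume "S = -\<infinity>"
    then have "ereal (1 - \<gamma>) \<le> Phi \<gamma> \<mu> S g y0"
      using add_left_mono[OF lip_ge[of y0], of "ereal (1 - \<gamma>)"] by (simp add: Phi_lip_env)
    with ga1 have "0 < Phi \<gamma> \<mu> S g y0" by (simp add: less_le_trans[of 0 "ereal (1 - \<gamma>)"])
    then have "piop (Phi \<gamma> \<mu> S g y0) > 0" by (simp add: piop_def)
    then show False using step_at_wave[OF tw, of y0] le0[of "y0 - v"] by (simp add: S_def)
  qed
  moreover have "S \<noteq> \<infinity>"
  proof
    assume "S = \<infinity>"
    have "lip_env g (y0 + v) \<noteq> \<infinity>" "lip_env g (y0 + v) \<noteq> -\<infinity>"
      using lip_le[of "y0 + v"] lip_ge[of "y0 + v"] by auto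
    then have "Phi \<gamma> \<mu> S g (y0 + v) = -\<infinity>"
      using \<open>S = \<infinity>\<close> mu0 by (simp add: Phi_lip_env)
    then show False using step_at_wave[OF tw, of "y0 + v"] gy0 by (simp add: S_def piop_def)
  qed
  ultimately have "S = ereal (real_of_ereal S)" by (intro ereal_real_cases)
  then show ?thesis unfolding S_def by blast
qed

text \<open>If \<open>g \<le> 0\<close>, the threshold \<open>s\<close> is approached by points where the one-sided envelope is at
  least \<open>2\<gamma> - 1\<close>; as the envelope decays at rate at most 1, \<open>sup\<^sub>x \<Phi>\<^sub>s[g] x\<close> stays near \<open>\<gamma> > 0\<close>.\<close>

lemma wave_has_pos:
  assumes adm: "admissible_wave g" and tw: "traveling_wave \<gamma> \<mu> g v"
  shows "\<exists>y. g y > 0"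
proof (rule ccontr)
  assume "\<not> (\<exists>y. g y > 0)"
  then have le0: "g y \<le> 0" for y by (simp add: not_less)
  have fin: "\<And>y. g y \<noteq> \<infinity>" using adm by (simp add: admissible_wave_def)
  obtain s where s: "sfun \<gamma> \<mu> g = ereal s" using sfun_finite_if_nonpos[OF adm tw le0] by blast
  define c where "c = min 1 \<mu>"
  have c: "0 \<le> c" "c \<le> 1" using mu0 by (auto simp: c_def)
  have "ereal (s - \<gamma> / 2) < Sup (ereal ` {x. ereal \<gamma> \<le> pfun \<gamma> \<mu> g x})"
    using s ga0 by (simp add: sfun_def)
  then obtain x1 where x1: "ereal \<gamma> \<le> pfun \<gamma> \<mu> g x1" "s - \<gamma> / 2 < x1"
    by (auto simp: less_SUP_iff)
  have "ereal x1 \<le> Sup (ereal ` {x. ereal \<gamma> \<le> pfun \<gamma> \<mu> g x})"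
    using x1(1) by (intro SUP_upper) simp
  then have "x1 \<le> s" using s by (simp add: sfun_def)
  have "c * (s - x1) \<le> \<gamma> / 2"
    using c x1(2) \<open>x1 \<le> s\<close> mult_left_le_one_le[of "s - x1" c] by simp
  have "ereal \<gamma> \<le> ereal (1 - \<gamma>) + decay_env c g x1"
    using x1(1) ga0 by (auto simp: pfun_decay_env c_def piop_def split: if_splits)
  also have "\<dots> \<le> ereal (1 - \<gamma>) + (decay_env c g s + ereal (c * (s - x1)))"
    using decay_env_le_shift[OF \<open>x1 \<le> s\<close> c(1)] by (rule add_left_mono)
  also have "\<dots> \<le> ereal (1 - \<gamma>) + (decay_env c g s + ereal (\<gamma> / 2))"
    using \<open>c * (s - x1) \<le> \<gamma> / 2\<close> by (intro add_left_mono) simp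
  finally have "ereal (\<gamma> / 2) \<le> ereal (1 - \<gamma>) + decay_env c g s"
    by (cases "decay_env c g s") auto
  also have "\<dots> = (SUP x. Phi \<gamma> \<mu> (ereal s) g x)"
    using SUP_Phi_eq_decay_env[OF fin, of \<mu> \<gamma> s] mu0 by (simp add: c_def)
  finally have "0 < (SUP x. Phi \<gamma> \<mu> (ereal s) g x)"
    using ga0 by (simp add: less_le_trans[of 0 "ereal (\<gamma> / 2)"])
  then obtain z where "0 < Phi \<gamma> \<mu> (ereal s) g z" by (auto simp: less_SUP_iff)
  then have "g (z - v) > 0" using step_at_wave[OF tw, of z] s by (simp add: piop_def)
  then show False using le0[of "z - v"] by simp
qed

lemma wave_translate_eq:
  assumes adm: "admissible_wave g" and tw: "traveling_wave \<gamma> \<mu> g v"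
  shows "\<exists>r. Sup (ereal ` {x. g x > 0}) = ereal r \<and> shift (- r) g = cutoff wave \<and> v = speed"
proof -
  define A where "A = {x. g x > 0}"
  define r where "r = Sup A"
  have fin: "\<And>y. g y \<noteq> \<infinity>" and cc: "concave_ext g" and cpt: "compact (support g)"
    using adm by (simp_all add: admissible_wave_def)
  obtain x0 where x0: "x0 \<in> A" using wave_has_pos[OF adm tw] by (auto simp: A_def)
  have As: "A \<subseteq> support g" by (auto simp: A_def support_def)
  have bdd: "bdd_above A"
    using bounded_subset[OF compact_imp_bounded[OF cpt] As] by (rule bounded_imp_bdd_above)
  have "continuous (at_left (Sup A)) ereal"
    by (rule continuous_at_ereal[OF continuous_ident])
  then have "ereal (Sup A) = Sup (ereal ` A)"
    using x0 bdd by (intro continuous_at_Sup_mono) (auto simp: mono_def)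
  then have Sr: "Sup (ereal ` A) = ereal r" by (simp add: r_def)
  have neg: "g y = -\<infinity>" if y: "y > r" for y
  proof (rule ccontr)
    assume "g y \<noteq> -\<infinity>"
    then have nonneg: "0 \<le> g y" using wave_nonneg[OF tw] by simp
    have pos: "0 < g x0" using x0 by (simp add: A_def)
    have "x0 \<le> r" using x0 bdd by (simp add: r_def cSup_upper)
    then have xz: "x0 < r + (y - r) / 2" using y by (simp add: field_simps)
    have zy: "r + (y - r) / 2 < y" using y by (simp add: field_simps)
    have "0 < g (r + (y - r) / 2)" by (rule concave_ext_pos_between[OF cc fin pos nonneg xz zy])
    then have "r + (y - r) / 2 \<in> A" by (simp add: A_def)
    then have "r + (y - r) / 2 \<le> Sup A" using bdd by (rule cSup_upper)
    moreover have "r < r + (y - r) / 2" using y by (simp add: field_simps)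
    ultimately show False by (simp add: r_def)
  qed
  have "r \<in> closure A" unfolding r_def using x0 bdd by (intro closure_contains_Sup) auto
  then have "r \<in> support g"
    using closure_minimal[OF As compact_imp_closed[OF cpt]] by blast
  then have gr: "g r \<noteq> -\<infinity>" by (auto simp: support_def)
  define h where "h = shift (- r) g"
  have "anchored_wave \<gamma> \<mu> h v"
  proof (intro anchored_wave.intro anchored_wave_axioms.intro wave_params_axioms)
    show "admissible_wave h" unfolding h_def by (rule admissible_shift[OF adm])
    show "step \<gamma> \<mu> h = shift v h" unfolding h_def by (rule traveling_wave_step[OF traveling_wave_shift[OF tw]])
    show "h y = -\<infinity>" if "y > 0" for y using neg that by (simp add: h_def shift_def)
    show "h 0 \<noteq> -\<infinity>" using gr by (simp add: h_def shift_def)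
    show "\<exists>y. h y > 0" using x0 by (intro exI[of _ "x0 - r"]) (simp add: h_def shift_def A_def)
  qed
  then have "h = cutoff wave \<and> v = speed" by (rule anchored_wave.eq_wave)
  then show ?thesis using Sr by (auto simp: A_def h_def)
qed

lemma normalized_wave_eq_wave:
  assumes "admissible_wave g" and "traveling_wave \<gamma> \<mu> g v" and "Sup (ereal ` {x. g x > 0}) = 0"
  shows "g = cutoff wave" and "v = speed"
proof -
  obtain r where "Sup (ereal ` {x. g x > 0}) = ereal r" "shift (- r) g = cutoff wave" "v = speed"
    using wave_translate_eq[OF assms(1,2)] by blast
  moreover have "r = 0" using assms(3) calculation(1) by (simp add: zero_ereal_def)
  ultimately show "g = cutoff wave" "v = speed" by (simp_all add: shift_def)
qed

lemma waves_unique_up_to_shift: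
  "\<forall>g1 v1 g2 v2. admissible_wave g1 \<and> traveling_wave \<gamma> \<mu> g1 v1 \<and>
     admissible_wave g2 \<and> traveling_wave \<gamma> \<mu> g2 v2 \<longrightarrow> (\<exists>c. \<forall>x. g2 x = g1 (x - c))"
proof (intro allI impI)
  fix g1 v1 g2 v2
  assume "admissible_wave g1 \<and> traveling_wave \<gamma> \<mu> g1 v1 \<and> admissible_wave g2 \<and> traveling_wave \<gamma> \<mu> g2 v2"
  then obtain r1 r2 where "shift (- r1) g1 = cutoff wave" "shift (- r2) g2 = cutoff wave"
    using wave_translate_eq by meson
  then have "g1 x = cutoff wave (x - r1)" "g2 x = cutoff wave (x - r2)" for x
    by (metis diff_add_cancel minus_minus shift_def diff_minus_eq_add)+
  then show "\<exists>c. \<forall>x. g2 x = g1 (x - c)"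
    by (intro exI[of _ "r2 - r1"]) simp
qed

end

section \<open>Shape of the normalized wave\<close>

context wave_params
begin

lemma wave_support_interval:
  "\<exists>L<0. {y. 0 \<le> wave y} = {L..0}"
proof -
  define A where "A = {y. 0 \<le> wave y}"
  obtain B where B: "\<And>y. wave y \<ge> 0 \<Longrightarrow> - B \<le> y \<and> y \<le> 0" using wave_support_bounded by blast
  have "0 \<in> A" using W.W_0 by (simp add: A_def)
  then have ne: "A \<noteq> {}" by blast
  have bdd: "bdd_below A" using B by (auto simp: A_def bdd_below_def)
  have cl: "closed A" unfolding A_def
    by (rule closed_Collect_le) (auto intro: W.W_continuous_on continuous_on_const)
  define L where "L = Inf A"
  have LA: "L \<in> A" using closed_contains_Inf[OF ne bdd cl] by (simp add: L_def)
  have eq: "A = {L..0}"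
  proof (intro set_eqI iffI)
    fix y assume y: "y \<in> A"
    then have "L \<le> y" using bdd by (simp add: L_def cInf_lower)
    moreover have "y \<le> 0" using y B by (auto simp: A_def)
    ultimately show "y \<in> {L..0}" by simp
  next
    fix y assume y: "y \<in> {L..0}"
    have "0 \<le> profile \<mu> KN kink speed y" using W.W_nonneg_right[of L y] LA y by (auto simp: A_def)
    then show "y \<in> A" by (simp add: A_def)
  qed
  obtain y1 where y1: "y1 < 0" "wave y1 > 0" using wave_pos_point by blast
  then have "y1 \<in> A" by (simp add: A_def)
  then have "L < 0" using y1 eq by auto
  then show ?thesis using eq by (auto simp: A_def)
qed

lemma cutoff_wave_has_derivative:
  assumes D: "(wave has_real_derivative D) (at x)"
    and L: "{y. 0 \<le> wave y} = {L..0}" and x: "x \<in> {L..0}"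
  shows "((\<lambda>y. real_of_ereal (cutoff wave y)) has_real_derivative D) (at x within {L..0})"
proof (rule has_field_derivative_transform_within[OF has_field_derivative_at_within[OF D] zero_less_one x])
  fix y assume "y \<in> {L..0}"
  then have "0 \<le> wave y" using L by blast
  then show "wave y = real_of_ereal (cutoff wave y)" by (simp add: cutoff_def piop_ereal)
qed

lemma cutoff_wave_has_derivative_piece:
  assumes "j \<le> KN + 2" "0 < j \<Longrightarrow> x < breakpoint kink speed j"
    "j < KN + 2 \<Longrightarrow> breakpoint kink speed (Suc j) < x"
    and "{y. 0 \<le> wave y} = {L..0}" "x \<in> {L..0}"
  shows "((\<lambda>y. real_of_ereal (cutoff wave y)) has_real_derivative slope \<mu> KN j) (at x within {L..0})"
  using assms by (intro cutoff_wave_has_derivative W.W_has_derivative_piece)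

lemma Sup_Phi_threshold_wave: "Sup (ereal ` {\<xi>. ereal \<gamma> \<le> (SUP x. Phi \<gamma> \<mu> (ereal \<xi>) (cutoff wave) x)}) = ereal front"
proof -
  have fin: "\<And>y. cutoff wave y \<noteq> \<infinity>" by (simp add: cutoff_def piop_ereal)
  have "{\<xi>. ereal \<gamma> \<le> (SUP x. Phi \<gamma> \<mu> (ereal \<xi>) (cutoff wave) x)} = {\<xi>. ereal \<gamma> \<le> pfun \<gamma> \<mu> (cutoff wave) \<xi>}"
  proof (intro set_eqI)
    fix \<xi>
    define z where "z = ereal (1 - \<gamma>) + decay_env (min 1 \<mu>) (cutoff wave) \<xi>"
    have a: "(SUP x. Phi \<gamma> \<mu> (ereal \<xi>) (cutoff wave) x) = z"
      unfolding z_def by (rule SUP_Phi_eq_decay_env[OF fin]) (use mu0 in simp)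
    have b: "pfun \<gamma> \<mu> (cutoff wave) \<xi> = piop z" by (simp add: pfun_decay_env z_def)
    have "(ereal \<gamma> \<le> z) = (ereal \<gamma> \<le> piop z)"
    proof
      assume "ereal \<gamma> \<le> z"
      moreover have "(0::ereal) \<le> ereal \<gamma>" using ga0 by (simp add: zero_ereal_def)
      ultimately have "0 \<le> z" by (rule order_trans[rotated])
      then show "ereal \<gamma> \<le> piop z" using \<open>ereal \<gamma> \<le> z\<close> by (simp add: piop_def)
    next
      assume h: "ereal \<gamma> \<le> piop z"
      then have "piop z \<noteq> -\<infinity>" by auto
      then have "piop z = z" using piop_not_minf by blast
      then show "ereal \<gamma> \<le> z" using h by simp
    qed
    then show "\<xi> \<in> {\<xi>. ereal \<gamma> \<le> (SUP x. Phi \<gamma> \<mu> (ereal \<xi>) (cutoff wave) x)} \<longleftrightarrow> \<xi> \<in> {\<xi>. ereal \<gamma> \<le> pfun \<gamma> \<mu> (cutoff wave) \<xi>}"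
      using a b by simp
  qed
  then show ?thesis using sfun_wave by (simp add: sfun_def)
qed

lemma speed_formula_eq:
  "\<mu> < 1 \<Longrightarrow> speed_formula \<mu> a = (if a \<le> gamma_c \<mu> then 2 * a / speed_denom else 1 - a)"
  by (simp add: speed_formula_def speed_denom_def kN_real)

lemma gamma_c_bounds: "\<mu> < 1 \<Longrightarrow> 0 < gamma_c \<mu> \<and> gamma_c \<mu> < 1"
  using speed_denom_pos by (simp add: gamma_c_eq)

lemma speed_formula_branches_meet:
  assumes "\<mu> < 1"
  shows "2 * gamma_c \<mu> / speed_denom = 1 - gamma_c \<mu>"
proof -
  have "2 * gamma_c \<mu> = speed_denom * (2 / (2 + speed_denom))" by (simp add: gamma_c_eq)
  then have "2 * gamma_c \<mu> / speed_denom = 2 / (2 + speed_denom)"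
    using speed_denom_pos[OF assms] by simp
  also have "\<dots> = 1 - gamma_c \<mu>"
    using two_plus_speed_denom_pos by (simp add: gamma_c_eq field_simps)
  finally show ?thesis .
qed

lemma speed_formula_monotonicity:
  "\<mu> < 1 \<longrightarrow> 0 < gamma_c \<mu> \<and> gamma_c \<mu> < 1
          \<and> (\<forall>a b. 0 < a \<and> a < b \<and> b \<le> gamma_c \<mu> \<longrightarrow> speed_formula \<mu> a < speed_formula \<mu> b)
          \<and> (\<forall>a b. gamma_c \<mu> \<le> a \<and> a < b \<and> b < 1 \<longrightarrow> speed_formula \<mu> b < speed_formula \<mu> a)
          \<and> (\<forall>a. 0 < a \<and> a < 1 \<longrightarrow> speed_formula \<mu> a \<le> speed_formula \<mu> (gamma_c \<mu>))"
proof (intro impI conjI allI)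
  assume m1: "\<mu> < 1"
  note sf = speed_formula_eq[OF m1] and meet = speed_formula_branches_meet[OF m1]
  have D: "speed_denom > 0" by (rule speed_denom_pos[OF m1])
  show "0 < gamma_c \<mu>" "gamma_c \<mu> < 1" using gamma_c_bounds[OF m1] by auto
  show "speed_formula \<mu> a < speed_formula \<mu> b" if "0 < a \<and> a < b \<and> b \<le> gamma_c \<mu>" for a b
    using that D by (simp add: sf divide_strict_right_mono)
  show "speed_formula \<mu> b < speed_formula \<mu> a" if ab: "gamma_c \<mu> \<le> a \<and> a < b \<and> b < 1" for a b
  proof -
    have "1 - a \<le> speed_formula \<mu> a"
      using ab meet by (cases "a = gamma_c \<mu>") (simp_all add: sf)
    then show ?thesis using ab by (simp add: sf)
  qed
  show "speed_formula \<mu> a \<le> speed_formula \<mu> (gamma_c \<mu>)" if "0 < a \<and> a < 1" for a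
  proof (cases "a \<le> gamma_c \<mu>")
    case True
    then have "2 * a / speed_denom \<le> 2 * gamma_c \<mu> / speed_denom" using D by (simp add: divide_right_mono)
    then show ?thesis using True meet by (simp add: sf)
  next
    case False
    then show ?thesis using meet by (simp add: sf)
  qed
qed

lemma cutoff_wave_support:
  assumes L: "{y. 0 \<le> wave y} = {L..0}"
  shows "support (cutoff wave) = {L..0}" and "x \<notin> {L..0} \<Longrightarrow> cutoff wave x = -\<infinity>"
  using L by (auto simp: support_def cutoff_def piop_ereal)

lemma cutoff_wave_integral:
  assumes L: "{y. 0 \<le> wave y} = {L..0}"
  shows "\<exists>F g'. finite F
           \<and> (\<forall>x \<in> {L..0} - F.
                ((\<lambda>y. real_of_ereal (cutoff wave y)) has_real_derivative g' x) (at x within {L..0}))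
           \<and> (\<forall>x \<in> {L..0}. (g' has_integral (- real_of_ereal (cutoff wave x))) {x..0})"
proof (intro exI conjI ballI)
  define F where "F = breakpoint kink speed ` {1..KN + 2}"
  show "finite F" by (simp add: F_def)
  have D: "(wave has_real_derivative deriv wave x) (at x)" if "x \<notin> F" for x
    using W.W_differentiable[of x] that DERIV_imp_deriv by (fastforce simp: F_def)
  show "((\<lambda>y. real_of_ereal (cutoff wave y)) has_real_derivative deriv wave x) (at x within {L..0})"
    if "x \<in> {L..0} - F" for x
    using that by (intro cutoff_wave_has_derivative[OF D L]) auto
  fix x assume x: "x \<in> {L..0}"
  have "(deriv wave has_integral (wave 0 - wave x)) {x..0}"
  proof (rule fundamental_theorem_of_calculus_interior_strong[OF \<open>finite F\<close>])
    show "x \<le> 0" using x by simp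
    show "continuous_on {x..0} wave" by (rule W.W_continuous_on)
    show "(wave has_vector_derivative deriv wave t) (at t)" if "t \<in> {x<..<0} - F" for t
      using D[of t] that by (simp add: has_real_derivative_iff_has_vector_derivative)
  qed
  moreover have "0 \<le> wave x" using x L by blast
  ultimately show "(deriv wave has_integral (- real_of_ereal (cutoff wave x))) {x..0}"
    using W.W_0 by (simp add: cutoff_def piop_ereal)
qed

lemma case_i_support_bound:
  assumes gc: "\<gamma> \<le> gamma_c \<mu>" and x: "0 \<le> wave x"
  shows "breakpoint kink speed (KN + 2) < x"
proof (rule ccontr)
  define e where "e = breakpoint kink speed (KN + 2)"
  assume "\<not> breakpoint kink speed (KN + 2) < x"
  then have xe: "x \<le> e" by (simp add: e_def)
  have kink: "kink = speed" using case_i_facts[OF gc] by simp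
  have e0: "e \<le> 0" using speed_pos by (simp add: e_def breakpoint_def kink)
  have "0 \<le> wave e" using W.W_nonneg_between[OF x _ xe e0] W.W_0 by simp
  moreover have "wave e = speed * (real KN + 1) * (1 - \<mu> * (real KN + 2) / 2)"
    using W.W_breakpoint[of "KN + 2"] kink by (simp add: e_def algebra_simps)
  moreover have "1 - \<mu> * (real KN + 2) / 2 < 0"
    using KN_bounds(2) mu0 by (simp add: algebra_simps)
  then have "speed * (real KN + 1) * (1 - \<mu> * (real KN + 2) / 2) < 0"
    using speed_pos by (intro mult_pos_neg) auto
  ultimately show False by simp
qed

lemma wave_shape_case_i:
  assumes gc: "\<gamma> \<le> gamma_c \<mu>" and L: "{y. 0 \<le> wave y} = {L..0}"
  shows "\<mu> < 1 \<and> speed = 2 * \<gamma> / (kk \<mu> * (2 - (kk \<mu> + 1) * \<mu>)) \<and> speed \<le> front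
    \<and> (\<forall>j::nat. \<forall>x \<in> {L..0}. 1 \<le> j \<and> - (real j * speed) < x \<and> x < - ((real j - 1) * speed) \<longrightarrow>
         ((\<lambda>y. real_of_ereal (cutoff wave y)) has_real_derivative (real j * \<mu> - 1))
           (at x within {L..0}))"
proof (intro conjI allI ballI impI)
  have cf: "\<mu> < 1" "speed \<le> front" "kink = speed" using case_i_facts[OF gc] by auto
  show "\<mu> < 1" "speed \<le> front" using cf by auto
  show "speed = 2 * \<gamma> / (kk \<mu> * (2 - (kk \<mu> + 1) * \<mu>))" using gc by (simp add: speed_def)
  fix j :: nat and x
  assume x: "x \<in> {L..0}" and jx: "1 \<le> j \<and> - (real j * speed) < x \<and> x < - ((real j - 1) * speed)"
  have bpj: "breakpoint kink speed i = - ((real i - 1) * speed)" for i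
    using cf by (simp add: breakpoint_def algebra_simps)
  have "j \<le> KN + 1"
  proof (rule ccontr)
    assume "\<not> j \<le> KN + 1"
    then have "(real KN + 1) * speed \<le> (real j - 1) * speed"
      using speed_pos by (intro mult_right_mono) auto
    moreover have "0 \<le> wave x" using x L by blast
    then have "breakpoint kink speed (KN + 2) < x" by (rule case_i_support_bound[OF gc])
    moreover have "breakpoint kink speed (KN + 2) = - ((real KN + 1) * speed)"
      using bpj[of "KN + 2"] by simp
    ultimately show False using jx by linarith
  qed
  moreover have "((\<lambda>y. real_of_ereal (cutoff wave y)) has_real_derivative slope \<mu> KN j) (at x within {L..0})"
  proof (rule cutoff_wave_has_derivative_piece[OF _ _ _ L x])
    show "j \<le> KN + 2" using \<open>j \<le> KN + 1\<close> by simp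
    show "x < breakpoint kink speed j" using jx bpj by simp
    show "breakpoint kink speed (Suc j) < x" using jx bpj[of "Suc j"] by simp
  qed
  ultimately show "((\<lambda>y. real_of_ereal (cutoff wave y)) has_real_derivative (real j * \<mu> - 1))
      (at x within {L..0})"
    using jx by (simp add: slope_def)
qed

lemma wave_shape_case_ii:
  assumes gc: "\<gamma> > gamma_c \<mu>" and L: "{y. 0 \<le> wave y} = {L..0}"
  shows "speed = 1 - \<gamma>
    \<and> speed - front = 1 - (1 - \<gamma>) * (kk \<mu> * (1 - (kk \<mu> + 1) / 2 * \<mu>) + 1)
    \<and> speed - front > 0
    \<and> (\<exists>F. finite F \<and> (\<forall>x \<in> {L..0} - F.
         (x > front - speed \<longrightarrow>
            ((\<lambda>y. real_of_ereal (cutoff wave y)) has_real_derivative (-1)) (at x within {L..0}))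
         \<and> (\<forall>j::nat. 1 \<le> j \<and> real j \<le> KK \<mu> + 1 \<and>
               front - (real j + 1) * speed < x \<and> x < front - real j * speed \<longrightarrow>
            ((\<lambda>y. real_of_ereal (cutoff wave y)) has_real_derivative (real j * \<mu> - 1))
              (at x within {L..0}))
         \<and> (x < front - (KK \<mu> + 2) * speed \<longrightarrow>
            ((\<lambda>y. real_of_ereal (cutoff wave y)) has_real_derivative (1 + \<mu>))
              (at x within {L..0}))))"
proof (intro conjI exI[of _ "{}"] finite.emptyI ballI allI impI)
  have ngc: "\<not> \<gamma> \<le> gamma_c \<mu>" using gc by simp
  then show "speed = 1 - \<gamma>" by (simp add: speed_def)
  show "speed - front = 1 - (1 - \<gamma>) * (kk \<mu> * (1 - (kk \<mu> + 1) / 2 * \<mu>) + 1)"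
    using ngc by (simp add: front_def)
  show "speed - front > 0" using case_ii_front_gap[OF ngc] by simp
  have bpj: "breakpoint kink speed i = front - real i * speed" for i
    using case_ii_front_gap[OF ngc] by (simp add: breakpoint_def kink_def)
  note deriv = cutoff_wave_has_derivative_piece[OF _ _ _ L]
  fix x assume "x \<in> {L..0} - {}"
  then have x: "x \<in> {L..0}" by simp
  show "((\<lambda>y. real_of_ereal (cutoff wave y)) has_real_derivative (-1)) (at x within {L..0})"
    if "x > front - speed"
    using deriv[of 0 x] x that bpj[of 1] by (simp add: slope_def)
  show "((\<lambda>y. real_of_ereal (cutoff wave y)) has_real_derivative (1 + \<mu>)) (at x within {L..0})"
    if "x < front - (KK \<mu> + 2) * speed"
    using deriv[of "KN + 2" x] x that bpj[of "KN + 2"] KN_real by (simp add: slope_def algebra_simps)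
  fix j :: nat
  assume h: "1 \<le> j \<and> real j \<le> KK \<mu> + 1 \<and> front - (real j + 1) * speed < x \<and> x < front - real j * speed"
  then have jK: "j \<le> KN + 1" using KN_real by (simp flip: of_nat_Suc)
  have "((\<lambda>y. real_of_ereal (cutoff wave y)) has_real_derivative slope \<mu> KN j) (at x within {L..0})"
    using deriv[of j x] jK h x bpj[of j] bpj[of "Suc j"] by (simp add: algebra_simps)
  then show "((\<lambda>y. real_of_ereal (cutoff wave y)) has_real_derivative (real j * \<mu> - 1))
      (at x within {L..0})"
    using jK h by (simp add: slope_def)
qed

lemma normalized_wave_shape:
  assumes adm: "admissible_wave g" and tw: "traveling_wave \<gamma> \<mu> g v"
    and norm: "Sup (ereal ` {x. g x > 0}) = 0"
  shows "\<exists>L < 0. support g = {L..0}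
            \<and> (\<forall>x. x \<notin> {L..0} \<longrightarrow> g x = -\<infinity>)
            \<and> (\<exists>F g'. finite F
                 \<and> (\<forall>x \<in> {L..0} - F.
                      ((\<lambda>y. real_of_ereal (g y)) has_real_derivative g' x) (at x within {L..0}))
                 \<and> (\<forall>x \<in> {L..0}. (g' has_integral (- real_of_ereal (g x))) {x..0}))
            \<and> (\<exists>s::real. Sup (ereal ` {\<xi>. (SUP x. Phi \<gamma> \<mu> (ereal \<xi>) g x) \<ge> ereal \<gamma>}) = ereal s
                \<and> (\<gamma> \<le> gamma_c \<mu> \<longrightarrow>
                     \<mu> < 1
                     \<and> v = 2 * \<gamma> / (kk \<mu> * (2 - (kk \<mu> + 1) * \<mu>))
                     \<and> v \<le> s
                     \<and> (\<forall>j::nat. \<forall>x \<in> {L..0}. 1 \<le> j \<and> - (real j * v) < x \<and> x < - ((real j - 1) * v) \<longrightarrow>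
                          ((\<lambda>y. real_of_ereal (g y)) has_real_derivative (real j * \<mu> - 1))
                            (at x within {L..0})))
                \<and> (\<gamma> > gamma_c \<mu> \<longrightarrow>
                     v = 1 - \<gamma>
                     \<and> v - s = 1 - (1 - \<gamma>) * (kk \<mu> * (1 - (kk \<mu> + 1) / 2 * \<mu>) + 1)
                     \<and> v - s > 0
                     \<and> (\<exists>F. finite F \<and> (\<forall>x \<in> {L..0} - F.
                          (x > s - v \<longrightarrow>
                             ((\<lambda>y. real_of_ereal (g y)) has_real_derivative (-1)) (at x within {L..0}))
                          \<and> (\<forall>j::nat. 1 \<le> j \<and> real j \<le> KK \<mu> + 1 \<and>
                                s - (real j + 1) * v < x \<and> x < s - real j * v \<longrightarrow>
                             ((\<lambda>y. real_of_ereal (g y)) has_real_derivative (real j * \<mu> - 1))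
                               (at x within {L..0}))
                          \<and> (x < s - (KK \<mu> + 2) * v \<longrightarrow>
                             ((\<lambda>y. real_of_ereal (g y)) has_real_derivative (1 + \<mu>))
                               (at x within {L..0}))))))"
proof -
  have g: "g = cutoff wave" and v: "v = speed"
    using normalized_wave_eq_wave[OF adm tw norm] by auto
  obtain L where "L < 0" and L: "{y. 0 \<le> wave y} = {L..0}"
    using wave_support_interval by blast
  show ?thesis unfolding g v
    using \<open>L < 0\<close> cutoff_wave_support[OF L] cutoff_wave_integral[OF L] Sup_Phi_threshold_wave
      wave_shape_case_i[OF _ L] wave_shape_case_ii[OF _ L] by blast
qed

end

theorem theoremS3p1:
  fixes \<gamma> \<mu> :: real
  assumes "0 < \<gamma>" and "\<gamma> < 1" and "0 < \<mu>" and "\<mu> \<noteq> 1"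
  shows
    \<comment> \<open>existence (of a wave, which can be normalized)\<close>
    "(\<exists>g v. admissible_wave g \<and> traveling_wave \<gamma> \<mu> g v
            \<and> Sup (ereal ` {x. g x > 0}) = 0)
     \<comment> \<open>uniqueness up to translation\<close>
     \<and> (\<forall>g1 v1 g2 v2. admissible_wave g1 \<and> traveling_wave \<gamma> \<mu> g1 v1 \<and>
           admissible_wave g2 \<and> traveling_wave \<gamma> \<mu> g2 v2 \<longrightarrow>
           (\<exists>c. \<forall>x. g2 x = g1 (x - c)))
     \<comment> \<open>properties of the normalized wave\<close>
     \<and> (\<forall>g v. admissible_wave g \<and> traveling_wave \<gamma> \<mu> g v
            \<and> Sup (ereal ` {x. g x > 0}) = 0 \<longrightarrow>
          (\<exists>L < 0. support g = {L..0}
            \<and> (\<forall>x. x \<notin> {L..0} \<longrightarrow> g x = -\<infinity>)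
            \<and> (\<exists>F g'. finite F
                 \<and> (\<forall>x \<in> {L..0} - F.
                      ((\<lambda>y. real_of_ereal (g y)) has_real_derivative g' x) (at x within {L..0}))
                 \<and> (\<forall>x \<in> {L..0}. (g' has_integral (- real_of_ereal (g x))) {x..0}))
            \<and> (\<exists>s::real. Sup (ereal ` {\<xi>. (SUP x. Phi \<gamma> \<mu> (ereal \<xi>) g x) \<ge> ereal \<gamma>}) = ereal s
                \<and> (\<gamma> \<le> gamma_c \<mu> \<longrightarrow>
                     \<mu> < 1
                     \<and> v = 2 * \<gamma> / (kk \<mu> * (2 - (kk \<mu> + 1) * \<mu>))
                     \<and> v \<le> s
                     \<and> (\<forall>j::nat. \<forall>x \<in> {L..0}. 1 \<le> j \<and> - (real j * v) < x \<and> x < - ((real j - 1) * v) \<longrightarrow>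
                          ((\<lambda>y. real_of_ereal (g y)) has_real_derivative (real j * \<mu> - 1))
                            (at x within {L..0})))
                \<and> (\<gamma> > gamma_c \<mu> \<longrightarrow>
                     v = 1 - \<gamma>
                     \<and> v - s = 1 - (1 - \<gamma>) * (kk \<mu> * (1 - (kk \<mu> + 1) / 2 * \<mu>) + 1)
                     \<and> v - s > 0
                     \<and> (\<exists>F. finite F \<and> (\<forall>x \<in> {L..0} - F.
                          (x > s - v \<longrightarrow>
                             ((\<lambda>y. real_of_ereal (g y)) has_real_derivative (-1)) (at x within {L..0}))
                          \<and> (\<forall>j::nat. 1 \<le> j \<and> real j \<le> KK \<mu> + 1 \<and>
                                s - (real j + 1) * v < x \<and> x < s - real j * v \<longrightarrow>
                             ((\<lambda>y. real_of_ereal (g y)) has_real_derivative (real j * \<mu> - 1))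
                               (at x within {L..0}))
                          \<and> (x < s - (KK \<mu> + 2) * v \<longrightarrow>
                             ((\<lambda>y. real_of_ereal (g y)) has_real_derivative (1 + \<mu>))
                               (at x within {L..0}))))))))
     \<comment> \<open>in particular: the speed, as a function of \<gamma>, changes monotonicity at \<gamma>_c and is maximal there\<close>
     \<and> (\<mu> < 1 \<longrightarrow> 0 < gamma_c \<mu> \<and> gamma_c \<mu> < 1
          \<and> (\<forall>a b. 0 < a \<and> a < b \<and> b \<le> gamma_c \<mu> \<longrightarrow> speed_formula \<mu> a < speed_formula \<mu> b)
          \<and> (\<forall>a b. gamma_c \<mu> \<le> a \<and> a < b \<and> b < 1 \<longrightarrow> speed_formula \<mu> b < speed_formula \<mu> a)
          \<and> (\<forall>a. 0 < a \<and> a < 1 \<longrightarrow> speed_formula \<mu> a \<le> speed_formula \<mu> (gamma_c \<mu>)))"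
proof -
  interpret wave_params \<gamma> \<mu> using assms by unfold_locales
  show ?thesis
    by (intro conjI wave_exists waves_unique_up_to_shift speed_formula_monotonicity allI impI
        normalized_wave_shape) auto
qed

end
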